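(* Let $\pi,\pi'\in\mathcal{P}$ with $\mathrm{supp}\,\pi\cap\mathrm{supp}\,\pi'=\varnothing$. If $\mathrm{Ext}^1(\mathcal{V}(\pi),\mathcal{V}(\pi'))\neq0$, then $\pi=0$ or $\pi'=0$.
   Context: $\mathfrak{g}$ is a finite-dimensional complex semisimple Lie algebra; $P^+$ is the set of dominant integral weights and $V(\lambda)$ the simple $\mathfrak{g}$-module of highest weight $\lambda$. $A$ is a nonzero finitely generated commutative $\mathbb{C}$-algebra and $A\otimes\mathfrak{g}$ has bracket $[a\otimes x,b\otimes y]=ab\otimes[x,y]$. For a maximal ideal $\mathfrak{m}$, $V_{\mathfrak{m}}(\lambda)$ is $V(\lambda)$ with $a\otimes x$ acting by $a_{\mathfrak{m}}x$, $a_{\mathfrak{m}}$ being the image of $a$ in $A/\mathfrak{m}\simeq\mathbb{C}$. $\mathcal{P}$ is the set of finitely supported functions $\pi:\mathrm{Specm}\,A\to P^+$ with $\mathrm{supp}\,\pi=\{\mathfrak{m}:\pi(\mathfrak{m})\ne0\}$, and $\mathcal{V}(\pi)=\bigotimes_{\mathfrak{m}\in\mathrm{supp}\,\pi}V_{\mathfrak{m}}(\pi(\mathfrak{m}))$ (so $\mathcal{V}(0)$ is trivial); these are all finite-dimensional simple $A\otimes\mathfrak{g}$-modules. $\mathrm{Ext}^1$ is the Yoneda extension group in the category of finite-dimensional $A\otimes\mathfrak{g}$-modules. *)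

theory Defs
  imports "Jordan_Normal_Form.Matrix"
begin

text \<open>A finite-dimensional complex Lie algebra g is presented as C^d (carrier_vec d)
  with a bracket br.\<close>

definition cvsubspace :: "nat \<Rightarrow> complex vec set \<Rightarrow> bool" where
  "cvsubspace d S \<longleftrightarrow> S \<subseteq> carrier_vec d \<and> 0\<^sub>v d \<in> S \<and>
     (\<forall>x\<in>S. \<forall>y\<in>S. x + y \<in> S) \<and> (\<forall>c. \<forall>x\<in>S. c \<cdot>\<^sub>v x \<in> S)"

definition lie_algebra :: "nat \<Rightarrow> (complex vec \<Rightarrow> complex vec \<Rightarrow> complex vec) \<Rightarrow> bool" where
  "lie_algebra d br \<longleftrightarrow>
     (\<forall>x\<in>carrier_vec d. \<forall>y\<in>carrier_vec d. br x y \<in> carrier_vec d) \<and>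
     (\<forall>x\<in>carrier_vec d. \<forall>y\<in>carrier_vec d. \<forall>z\<in>carrier_vec d. br (x + y) z = br x z + br y z) \<and>
     (\<forall>c. \<forall>x\<in>carrier_vec d. \<forall>y\<in>carrier_vec d. br (c \<cdot>\<^sub>v x) y = c \<cdot>\<^sub>v br x y) \<and>
     (\<forall>x\<in>carrier_vec d. br x x = 0\<^sub>v d) \<and>
     (\<forall>x\<in>carrier_vec d. \<forall>y\<in>carrier_vec d. \<forall>z\<in>carrier_vec d.
        br x (br y z) + br y (br z x) + br z (br x y) = 0\<^sub>v d)"

definition bracket_sub :: "nat \<Rightarrow> (complex vec \<Rightarrow> complex vec \<Rightarrow> complex vec)
    \<Rightarrow> complex vec set \<Rightarrow> complex vec set \<Rightarrow> complex vec set" where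
  "bracket_sub d br I J = \<Inter>{S. cvsubspace d S \<and> {br x y |x y. x \<in> I \<and> y \<in> J} \<subseteq> S}"

primrec derived_series :: "nat \<Rightarrow> (complex vec \<Rightarrow> complex vec \<Rightarrow> complex vec)
    \<Rightarrow> complex vec set \<Rightarrow> nat \<Rightarrow> complex vec set" where
  "derived_series d br I 0 = I"
| "derived_series d br I (Suc k) =
     bracket_sub d br (derived_series d br I k) (derived_series d br I k)"

definition lie_ideal :: "nat \<Rightarrow> (complex vec \<Rightarrow> complex vec \<Rightarrow> complex vec) \<Rightarrow> complex vec set \<Rightarrow> bool" where
  "lie_ideal d br I \<longleftrightarrow> cvsubspace d I \<and> (\<forall>x\<in>carrier_vec d. \<forall>y\<in>I. br x y \<in> I)"

definition solvable_ideal :: "nat \<Rightarrow> (complex vec \<Rightarrow> complex vec \<Rightarrow> complex vec) \<Rightarrow> complex vec set \<Rightarrow> bool" where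
  "solvable_ideal d br I \<longleftrightarrow> (\<exists>k. derived_series d br I k = {0\<^sub>v d})"

definition semisimple :: "nat \<Rightarrow> (complex vec \<Rightarrow> complex vec \<Rightarrow> complex vec) \<Rightarrow> bool" where
  "semisimple d br \<longleftrightarrow> lie_algebra d br \<and>
     (\<forall>I. lie_ideal d br I \<and> solvable_ideal d br I \<longrightarrow> I = {0\<^sub>v d})"

definition g_rep :: "nat \<Rightarrow> (complex vec \<Rightarrow> complex vec \<Rightarrow> complex vec) \<Rightarrow> nat
    \<Rightarrow> (complex vec \<Rightarrow> complex mat) \<Rightarrow> bool" where
  "g_rep d br n \<rho> \<longleftrightarrow>
     (\<forall>x\<in>carrier_vec d. \<rho> x \<in> carrier_mat n n) \<and>
     (\<forall>x\<in>carrier_vec d. \<forall>y\<in>carrier_vec d. \<rho> (x + y) = \<rho> x + \<rho> y) \<and>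
     (\<forall>c. \<forall>x\<in>carrier_vec d. \<rho> (c \<cdot>\<^sub>v x) = c \<cdot>\<^sub>m \<rho> x) \<and>
     (\<forall>x\<in>carrier_vec d. \<forall>y\<in>carrier_vec d. \<rho> (br x y) = \<rho> x * \<rho> y - \<rho> y * \<rho> x)"

definition g_simple :: "nat \<Rightarrow> nat \<Rightarrow> (complex vec \<Rightarrow> complex mat) \<Rightarrow> bool" where
  "g_simple d n \<rho> \<longleftrightarrow> n > 0 \<and>
     (\<forall>W. cvsubspace n W \<and> (\<forall>x\<in>carrier_vec d. \<forall>w\<in>W. \<rho> x *\<^sub>v w \<in> W)
        \<longrightarrow> W = {0\<^sub>v n} \<or> W = carrier_vec n)"

text \<open>A is a commutative ring 'a together with a unital ring homomorphism emb : C -> A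
  (its C-algebra structure).\<close>

definition calg_hom :: "(complex \<Rightarrow> 'a::comm_ring_1) \<Rightarrow> bool" where
  "calg_hom emb \<longleftrightarrow> emb 1 = 1 \<and> (\<forall>x y. emb (x + y) = emb x + emb y) \<and>
     (\<forall>x y. emb (x * y) = emb x * emb y)"

definition gen_subalg :: "(complex \<Rightarrow> 'a::comm_ring_1) \<Rightarrow> 'a set \<Rightarrow> 'a set" where
  "gen_subalg emb S = \<Inter>{B. range emb \<subseteq> B \<and> S \<subseteq> B \<and> (\<forall>x\<in>B. \<forall>y\<in>B. x + y \<in> B \<and> x * y \<in> B)}"

definition fin_gen :: "(complex \<Rightarrow> 'a::comm_ring_1) \<Rightarrow> bool" where
  "fin_gen emb \<longleftrightarrow> (\<exists>S. finite S \<and> gen_subalg emb S = UNIV)"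

definition ring_ideal :: "'a::comm_ring_1 set \<Rightarrow> bool" where
  "ring_ideal I \<longleftrightarrow> 0 \<in> I \<and> (\<forall>x\<in>I. \<forall>y\<in>I. x + y \<in> I) \<and> (\<forall>a. \<forall>x\<in>I. a * x \<in> I)"

definition max_ideal :: "'a::comm_ring_1 set \<Rightarrow> bool" where
  "max_ideal m \<longleftrightarrow> ring_ideal m \<and> m \<noteq> UNIV \<and>
     (\<forall>J. ring_ideal J \<and> m \<subseteq> J \<longrightarrow> J = m \<or> J = UNIV)"

text \<open>a_m: the image of a in A/m = C, i.e. the scalar c with a - c in m.\<close>
definition eval_at :: "(complex \<Rightarrow> 'a::comm_ring_1) \<Rightarrow> 'a set \<Rightarrow> 'a \<Rightarrow> complex" where
  "eval_at emb m a = (THE c. a - emb c \<in> m)"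

text \<open>An (A tensor_C g)-module structure on C^n is given by a C-bilinear map
  rho : A x g -> gl_n(C) with [rho(a,x), rho(b,y)] = rho(ab,[x,y]).\<close>

type_synonym 'a agmod = "nat \<times> ('a \<Rightarrow> complex vec \<Rightarrow> complex mat)"

definition ag_rep :: "(complex \<Rightarrow> 'a::comm_ring_1) \<Rightarrow> nat \<Rightarrow> (complex vec \<Rightarrow> complex vec \<Rightarrow> complex vec)
    \<Rightarrow> 'a agmod \<Rightarrow> bool" where
  "ag_rep emb d br M \<longleftrightarrow> (case M of (n, \<rho>) \<Rightarrow>
     (\<forall>a. \<forall>x\<in>carrier_vec d. \<rho> a x \<in> carrier_mat n n) \<and>
     (\<forall>a b. \<forall>x\<in>carrier_vec d. \<rho> (a + b) x = \<rho> a x + \<rho> b x) \<and>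
     (\<forall>c a. \<forall>x\<in>carrier_vec d. \<rho> (emb c * a) x = c \<cdot>\<^sub>m \<rho> a x) \<and>
     (\<forall>a. \<forall>x\<in>carrier_vec d. \<forall>y\<in>carrier_vec d. \<rho> a (x + y) = \<rho> a x + \<rho> a y) \<and>
     (\<forall>c a. \<forall>x\<in>carrier_vec d. \<rho> a (c \<cdot>\<^sub>v x) = c \<cdot>\<^sub>m \<rho> a x) \<and>
     (\<forall>a b. \<forall>x\<in>carrier_vec d. \<forall>y\<in>carrier_vec d.
        \<rho> (a * b) (br x y) = \<rho> a x * \<rho> b y - \<rho> b y * \<rho> a x))"

definition ag_hom :: "nat \<Rightarrow> 'a agmod \<Rightarrow> 'a agmod \<Rightarrow> complex mat \<Rightarrow> bool" where
  "ag_hom d M N T \<longleftrightarrow> T \<in> carrier_mat (fst N) (fst M) \<and>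
     (\<forall>a. \<forall>x\<in>carrier_vec d. T * snd M a x = snd N a x * T)"

text \<open>Ext^1(M,N) \<noteq> 0 (Yoneda, in the category of finite-dimensional modules):
  there is a non-split short exact sequence 0 -> N -f-> E -g-> M -> 0.\<close>
definition Ext1_nonzero :: "(complex \<Rightarrow> 'a::comm_ring_1) \<Rightarrow> nat \<Rightarrow> (complex vec \<Rightarrow> complex vec \<Rightarrow> complex vec)
    \<Rightarrow> 'a agmod \<Rightarrow> 'a agmod \<Rightarrow> bool" where
  "Ext1_nonzero emb d br M N \<longleftrightarrow> (\<exists>E f g.
     ag_rep emb d br E \<and> ag_hom d N E f \<and> ag_hom d E M g \<and>
     (\<forall>v\<in>carrier_vec (fst N). f *\<^sub>v v = 0\<^sub>v (fst E) \<longrightarrow> v = 0\<^sub>v (fst N)) \<and>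
     (\<forall>w\<in>carrier_vec (fst M). \<exists>u\<in>carrier_vec (fst E). g *\<^sub>v u = w) \<and>
     {f *\<^sub>v v |v. v \<in> carrier_vec (fst N)} = {u \<in> carrier_vec (fst E). g *\<^sub>v u = 0\<^sub>v (fst M)} \<and>
     \<not> (\<exists>s. ag_hom d M E s \<and> g * s = 1\<^sub>m (fst M)))"

definition kron :: "complex mat \<Rightarrow> complex mat \<Rightarrow> complex mat" where
  "kron A B = mat (dim_row A * dim_row B) (dim_col A * dim_col B)
     (\<lambda>(i, j). A $$ (i div dim_row B, j div dim_col B) * B $$ (i mod dim_row B, j mod dim_col B))"

definition tensor_mod :: "'a agmod \<Rightarrow> 'a agmod \<Rightarrow> 'a agmod" where
  "tensor_mod M N = (fst M * fst N,
     \<lambda>a x. kron (snd M a x) (1\<^sub>m (fst N)) + kron (1\<^sub>m (fst M)) (snd N a x))"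

text \<open>V_m(V): the g-module V with a tensor x acting by a_m x.\<close>
definition eval_mod :: "(complex \<Rightarrow> 'a::comm_ring_1) \<Rightarrow> 'a set \<Rightarrow> nat \<times> (complex vec \<Rightarrow> complex mat)
    \<Rightarrow> 'a agmod" where
  "eval_mod emb m V = (fst V, \<lambda>a x. eval_at emb m a \<cdot>\<^sub>m snd V x)"

definition trivial_mod :: "'a agmod" where
  "trivial_mod = (1, \<lambda>a x. 0\<^sub>m 1 1)"

text \<open>A element pi of P is encoded by a list of pairs (m, V) listing supp pi
  (distinct maximal ideals) with V a simple g-module of highest weight pi(m) \<noteq> 0
  (i.e. a nontrivial finite-dimensional simple g-module).\<close>

type_synonym 'a pidata = "('a set \<times> (nat \<times> (complex vec \<Rightarrow> complex mat))) list"

definition valid_pi :: "nat \<Rightarrow> (complex vec \<Rightarrow> complex vec \<Rightarrow> complex vec) \<Rightarrow> 'a::comm_ring_1 pidata \<Rightarrow> bool" where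
  "valid_pi d br ps \<longleftrightarrow> distinct (map fst ps) \<and>
     (\<forall>(m, V) \<in> set ps. max_ideal m \<and> g_rep d br (fst V) (snd V) \<and> g_simple d (fst V) (snd V) \<and>
        (\<exists>x\<in>carrier_vec d. snd V x \<noteq> 0\<^sub>m (fst V) (fst V)))"

definition Vpi :: "(complex \<Rightarrow> 'a::comm_ring_1) \<Rightarrow> 'a pidata \<Rightarrow> 'a agmod" where
  "Vpi emb ps = foldr (\<lambda>(m, V) acc. tensor_mod (eval_mod emb m V) acc) ps trivial_mod"

end

theory Submission
  imports Defs
begin

text \<open>
  Let \<open>M = V(\<pi>)\<close>, \<open>N = V(\<pi>')\<close> with disjoint nonempty supports, and let
  \<open>0 \<rightarrow> N \<rightarrow> E \<rightarrow> M \<rightarrow> 0\<close> be an extension of \<open>A \<otimes> g\<close>-modules.  Choose \<open>m1 \<in> supp \<pi>\<close>,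
  \<open>m1' \<in> supp \<pi>'\<close> and, by the Chinese remainder theorem, \<open>e0, e0' \<in> A\<close> that are \<open>1\<close> at the
  chosen point and \<open>0\<close> at every other point of \<open>supp \<pi> \<union> supp \<pi>'\<close>.  Put \<open>e = e0\<^sup>2\<close>,
  \<open>e' = e0'\<^sup>2\<close>, \<open>u = e0 e0'\<close>.  Then \<open>e \<otimes> g\<close> acts on \<open>M\<close> through the simple factor at \<open>m1\<close>,
  so its operators jointly span \<open>M\<close>; \<open>e' \<otimes> g\<close> acts jointly injectively on \<open>N\<close>; \<open>e' \<otimes> g\<close>
  kills \<open>M\<close>, \<open>eA \<otimes> g\<close> kills \<open>N\<close>, \<open>uA \<otimes> g\<close> kills both, and \<open>e'e = u\<^sup>2\<close>.  The submodule
  \<open>W = (eA \<otimes> g) E\<close> is then killed by \<open>e' \<otimes> g\<close>, so it meets \<open>N\<close> trivially, and it maps onto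
  \<open>M\<close>; hence it is a complement of \<open>N\<close> and the extension splits.
\<close>

lemma cvsubspace_add: "cvsubspace n S \<Longrightarrow> x \<in> S \<Longrightarrow> y \<in> S \<Longrightarrow> x + y \<in> S"
  and cvsubspace_smult: "cvsubspace n S \<Longrightarrow> x \<in> S \<Longrightarrow> c \<cdot>\<^sub>v x \<in> S"
  and cvsubspace_zero: "cvsubspace n S \<Longrightarrow> 0\<^sub>v n \<in> S"
  and cvsubspace_carrier: "cvsubspace n S \<Longrightarrow> x \<in> S \<Longrightarrow> x \<in> carrier_vec n"
  by (auto simp: cvsubspace_def)

lemma mult_mat_vec_zero [simp]: "(A::complex mat) \<in> carrier_mat m n \<Longrightarrow> A *\<^sub>v 0\<^sub>v n = 0\<^sub>v m"
  by (rule eq_vecI) (auto simp: mult_mat_vec_def)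

lemma zero_mat_mult_vec [simp]: "v \<in> carrier_vec n \<Longrightarrow> (0\<^sub>m m n :: complex mat) *\<^sub>v v = 0\<^sub>v m"
  by auto

lemma vec_eq_if_diff_zero:
  assumes c: "(v::complex vec) \<in> carrier_vec n" "w \<in> carrier_vec n" and z: "v - w = 0\<^sub>v n"
  shows "v = w"
proof (rule eq_vecI)
  fix i assume "i < dim_vec w"
  then have "i < n" using c by simp
  then have "(v - w) $ i = 0" using z by simp
  then show "v $ i = w $ i" using c \<open>i < n\<close> by simp
qed (use c in simp)

lemma cvsubspace_diff:
  assumes S: "cvsubspace n S" and x: "x \<in> S" and y: "y \<in> S"
  shows "x - y \<in> S"
proof -
  have "x - y = x + (-1) \<cdot>\<^sub>v y"
    using cvsubspace_carrier[OF S x] cvsubspace_carrier[OF S y] by (intro eq_vecI) auto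
  then show ?thesis using S x y by (simp add: cvsubspace_add cvsubspace_smult)
qed

lemma cvsubspace_whole: "cvsubspace n (carrier_vec n)"
  and cvsubspace_null: "cvsubspace n {0\<^sub>v n}"
  by (auto simp: cvsubspace_def)

lemma preimage_subspace:
  assumes T: "T \<in> carrier_mat m n" and S: "cvsubspace m S"
  shows "cvsubspace n {v \<in> carrier_vec n. T *\<^sub>v v \<in> S}"
  using T cvsubspace_zero[OF S] cvsubspace_add[OF S] cvsubspace_smult[OF S]
  by (auto simp: cvsubspace_def mult_add_distrib_mat_vec mult_mat_vec)

lemma image_subspace:
  assumes T: "T \<in> carrier_mat m n" and S: "cvsubspace n S"
  shows "cvsubspace m ((*\<^sub>v) T ` S)"
  unfolding cvsubspace_def
proof (intro conjI ballI allI)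
  show "(*\<^sub>v) T ` S \<subseteq> carrier_vec m" using T cvsubspace_carrier[OF S] by auto
  show "0\<^sub>v m \<in> (*\<^sub>v) T ` S" using T cvsubspace_zero[OF S] by (auto intro!: image_eqI[of _ _ "0\<^sub>v n"])
next
  fix y z assume "y \<in> (*\<^sub>v) T ` S" "z \<in> (*\<^sub>v) T ` S"
  then obtain v w where "v \<in> S" "w \<in> S" "y = T *\<^sub>v v" "z = T *\<^sub>v w" by auto
  moreover have "T *\<^sub>v (v + w) = T *\<^sub>v v + T *\<^sub>v w"
    using T calculation cvsubspace_carrier[OF S] by (simp add: mult_add_distrib_mat_vec)
  ultimately show "y + z \<in> (*\<^sub>v) T ` S" using cvsubspace_add[OF S] by (metis image_eqI)
next
  fix c y assume "y \<in> (*\<^sub>v) T ` S"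
  then obtain v where "v \<in> S" "y = T *\<^sub>v v" by auto
  moreover have "T *\<^sub>v (c \<cdot>\<^sub>v v) = c \<cdot>\<^sub>v (T *\<^sub>v v)"
    using T calculation cvsubspace_carrier[OF S] by (simp add: mult_mat_vec)
  ultimately show "c \<cdot>\<^sub>v y \<in> (*\<^sub>v) T ` S" using cvsubspace_smult[OF S] by (metis image_eqI)
qed

definition vspan :: "nat \<Rightarrow> complex vec set \<Rightarrow> complex vec set" where
  "vspan n G = \<Inter>{S. cvsubspace n S \<and> G \<subseteq> S}"

lemma vspan_iff: "v \<in> vspan n G \<longleftrightarrow> (\<forall>S. cvsubspace n S \<and> G \<subseteq> S \<longrightarrow> v \<in> S)"
  unfolding vspan_def by blast

lemma vspan_superset: "G \<subseteq> vspan n G"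
  unfolding vspan_def by blast

lemma vspan_least: "cvsubspace n S \<Longrightarrow> G \<subseteq> S \<Longrightarrow> vspan n G \<subseteq> S"
  unfolding vspan_def by blast

lemma vspan_subspace:
  assumes "G \<subseteq> carrier_vec n"
  shows "cvsubspace n (vspan n G)"
  unfolding cvsubspace_def
proof (intro conjI ballI allI)
  show "vspan n G \<subseteq> carrier_vec n" using vspan_least[OF cvsubspace_whole assms] .
  show "0\<^sub>v n \<in> vspan n G" by (simp add: vspan_iff cvsubspace_zero)
  show "x + y \<in> vspan n G" if "x \<in> vspan n G" "y \<in> vspan n G" for x y
    using that by (auto simp: vspan_iff cvsubspace_add)
  show "c \<cdot>\<^sub>v x \<in> vspan n G" if "x \<in> vspan n G" for c x
    using that by (auto simp: vspan_iff cvsubspace_smult)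
qed

lemma vspan_invariant:
  assumes T: "T \<in> carrier_mat n n" and G: "G \<subseteq> carrier_vec n"
    and TG: "\<And>v. v \<in> G \<Longrightarrow> T *\<^sub>v v \<in> vspan n G" and w: "w \<in> vspan n G"
  shows "T *\<^sub>v w \<in> vspan n G"
proof -
  have "vspan n G \<subseteq> {v \<in> carrier_vec n. T *\<^sub>v v \<in> vspan n G}"
    using G TG by (intro vspan_least preimage_subspace[OF T vspan_subspace]) auto
  then show ?thesis using w by blast
qed

lemma vspan_kernel:
  assumes T: "T \<in> carrier_mat m n" and TG: "\<And>v. v \<in> G \<Longrightarrow> v \<in> carrier_vec n \<and> T *\<^sub>v v = 0\<^sub>v m"
    and w: "w \<in> vspan n G"
  shows "T *\<^sub>v w = 0\<^sub>v m"
proof -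
  have "vspan n G \<subseteq> {v \<in> carrier_vec n. T *\<^sub>v v \<in> {0\<^sub>v m}}"
    using TG by (intro vspan_least preimage_subspace[OF T cvsubspace_null]) auto
  then show ?thesis using w by blast
qed

lemma mat_vec_in_subspace:
  assumes S: "cvsubspace n S" and s: "(s::complex mat) \<in> carrier_mat n k"
    and cols: "\<And>j. j < k \<Longrightarrow> col s j \<in> S" and u: "u \<in> carrier_vec k"
  shows "s *\<^sub>v u \<in> S"
proof -
  define P where "P i = vec k (\<lambda>j. if j < i then u $ j else 0)" for i
  have "s *\<^sub>v P i \<in> S" if "i \<le> k" for i
    using that
  proof (induction i)
    case 0
    have "P 0 = 0\<^sub>v k" by (rule eq_vecI) (auto simp: P_def)
    then show ?case using s cvsubspace_zero[OF S] by simp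
  next
    case (Suc i)
    have unit: "s *\<^sub>v unit_vec k i = col s i"
      using s Suc by (intro eq_vecI) (auto simp: mult_mat_vec_def)
    have "P (Suc i) = P i + (u $ i) \<cdot>\<^sub>v unit_vec k i"
      by (rule eq_vecI) (auto simp: P_def unit_vec_def less_Suc_eq)
    then have "s *\<^sub>v P (Suc i) = s *\<^sub>v P i + (u $ i) \<cdot>\<^sub>v col s i"
      using s unit by (simp add: mult_add_distrib_mat_vec[of _ n k] mult_mat_vec[of _ n k] P_def)
    then show ?case using Suc cols cvsubspace_add[OF S] cvsubspace_smult[OF S] by simp
  qed
  moreover have "P k = u" by (rule eq_vecI) (use u in \<open>auto simp: P_def\<close>)
  ultimately show ?thesis by auto
qed

text \<open>A matrix mapping a subspace \<open>W\<close> onto \<open>C^m\<close> has a right inverse with image in \<open>W\<close>: send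
  the \<open>j\<close>-th unit vector to a preimage in \<open>W\<close>.\<close>

lemma right_inverse_into_subspace:
  fixes g :: "complex mat"
  assumes g: "g \<in> carrier_mat m n" and W: "cvsubspace n W"
    and onto: "\<And>z. z \<in> carrier_vec m \<Longrightarrow> \<exists>w\<in>W. g *\<^sub>v w = z"
  obtains s where "s \<in> carrier_mat n m" and "g * s = 1\<^sub>m m" and "\<And>z. z \<in> carrier_vec m \<Longrightarrow> s *\<^sub>v z \<in> W"
proof -
  define lift where "lift j = (SOME w. w \<in> W \<and> g *\<^sub>v w = unit_vec m j)" for j
  have lift: "lift j \<in> W \<and> g *\<^sub>v lift j = unit_vec m j" for j
    unfolding lift_def by (rule someI_ex) (use onto[of "unit_vec m j"] in auto)
  define s where "s = mat n m (\<lambda>(i,j). lift j $ i)"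
  have s_carr: "s \<in> carrier_mat n m" by (simp add: s_def)
  have s_col: "col s j = lift j" if "j < m" for j
  proof -
    have "lift j \<in> carrier_vec n" using lift cvsubspace_carrier[OF W] by blast
    then show ?thesis using that by (intro eq_vecI) (auto simp: s_def)
  qed
  have "g * s = 1\<^sub>m m"
  proof (rule eq_matI)
    fix i j assume i: "i < dim_row (1\<^sub>m m)" and j: "j < dim_col (1\<^sub>m m)"
    have "(g * s) $$ (i,j) = (g *\<^sub>v col s j) $ i" using g s_carr i j by (simp add: mult_mat_vec_def)
    also have "\<dots> = unit_vec m j $ i" using s_col[of j] lift[of j] j by simp
    finally show "(g * s) $$ (i,j) = 1\<^sub>m m $$ (i,j)" using i j by simp
  qed (use g s_carr in auto)
  moreover have "s *\<^sub>v z \<in> W" if "z \<in> carrier_vec m" for z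
    by (rule mat_vec_in_subspace[OF W s_carr _ that]) (use s_col lift in auto)
  ultimately show ?thesis using that s_carr by blast
qed

lemma commutator_mult_mat_vec:
  fixes A B :: "complex mat"
  assumes "A \<in> carrier_mat n n" "B \<in> carrier_mat n n" "v \<in> carrier_vec n"
  shows "(A * B - B * A) *\<^sub>v v = A *\<^sub>v (B *\<^sub>v v) - B *\<^sub>v (A *\<^sub>v v)"
  using assms by (simp add: minus_mult_distrib_mat_vec[of _ n n])

lemma mat_eq_by_vec:
  fixes A B :: "complex mat"
  assumes A: "A \<in> carrier_mat nr nc" and B: "B \<in> carrier_mat nr nc"
    and AB: "\<And>v. v \<in> carrier_vec nc \<Longrightarrow> A *\<^sub>v v = B *\<^sub>v v"
  shows "A = B"
proof (rule eq_matI)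
  fix i j assume i: "i < dim_row B" and j: "j < dim_col B"
  have "(A *\<^sub>v unit_vec nc j) $ i = (B *\<^sub>v unit_vec nc j) $ i" using AB by simp
  then show "A $$ (i,j) = B $$ (i,j)" using A B i j by (simp add: mult_mat_vec_def)
qed (use A B in auto)

lemma mat_vec_entry:
  "A \<in> carrier_mat k k \<Longrightarrow> a \<in> carrier_vec k \<Longrightarrow> q < k \<Longrightarrow> (A *\<^sub>v a) $ q = (\<Sum>p<k. A $$ (q,p) * a $ p)"
  by (simp add: mult_mat_vec_def scalar_prod_def atLeast0LessThan)

section \<open>Nondegenerate families of matrices\<close>

text \<open>A simple
  nontrivial module is both (for the operators of \<open>g\<close>), and this passes to tensor products with
  identities; it is what lets \<open>e \<otimes> g\<close> detect \<open>M\<close> and \<open>e' \<otimes> g\<close> detect \<open>N\<close>.\<close>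

definition jointly_injective :: "'b set \<Rightarrow> nat \<Rightarrow> ('b \<Rightarrow> complex mat) \<Rightarrow> bool" where
  "jointly_injective X n F \<longleftrightarrow> (\<forall>v\<in>carrier_vec n. (\<forall>x\<in>X. F x *\<^sub>v v = 0\<^sub>v n) \<longrightarrow> v = 0\<^sub>v n)"

definition jointly_spanning :: "'b set \<Rightarrow> nat \<Rightarrow> ('b \<Rightarrow> complex mat) \<Rightarrow> bool" where
  "jointly_spanning X n F \<longleftrightarrow>
     (\<forall>S. cvsubspace n S \<and> (\<forall>x\<in>X. \<forall>u\<in>carrier_vec n. F x *\<^sub>v u \<in> S) \<longrightarrow> S = carrier_vec n)"

definition nondegenerate :: "'b set \<Rightarrow> nat \<Rightarrow> ('b \<Rightarrow> complex mat) \<Rightarrow> bool" where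
  "nondegenerate X n F \<longleftrightarrow> jointly_injective X n F \<and> jointly_spanning X n F"

lemma nondegenerate_cong:
  "nondegenerate X n G \<Longrightarrow> (\<And>x. x \<in> X \<Longrightarrow> F x = G x) \<Longrightarrow> nondegenerate X n F"
  by (simp add: nondegenerate_def jointly_injective_def jointly_spanning_def)

text \<open>\<open>{..<N}\<close> is cut into \<open>s\<close> blocks of size \<open>n\<close>: \<open>idx j i\<close> is the \<open>i\<close>-th index of block \<open>j\<close>,
  with inverse \<open>m \<mapsto> (blk m, pos m)\<close>.\<close>

definition block_indexing :: "nat \<Rightarrow> nat \<Rightarrow> nat \<Rightarrow> (nat \<Rightarrow> nat \<Rightarrow> nat) \<Rightarrow> (nat \<Rightarrow> nat) \<Rightarrow> (nat \<Rightarrow> nat) \<Rightarrow> bool" where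
  "block_indexing N s n idx blk pos \<longleftrightarrow>
     (\<forall>j<s. \<forall>i<n. idx j i < N \<and> blk (idx j i) = j \<and> pos (idx j i) = i) \<and>
     (\<forall>m<N. blk m < s \<and> pos m < n \<and> idx (blk m) (pos m) = m)"

lemma block_indexing_idx:
  "block_indexing N s n idx blk pos \<Longrightarrow> j < s \<Longrightarrow> i < n \<Longrightarrow>
     idx j i < N \<and> blk (idx j i) = j \<and> pos (idx j i) = i"
  and block_indexing_blk:
  "block_indexing N s n idx blk pos \<Longrightarrow> m < N \<Longrightarrow> blk m < s \<and> pos m < n \<and> idx (blk m) (pos m) = m"
  by (simp_all add: block_indexing_def)

text \<open>\<open>K\<close> acts on \<open>C^N\<close> as \<open>A\<close> on every block.\<close>

definition acts_blockwise :: "nat \<Rightarrow> nat \<Rightarrow> nat \<Rightarrow> (nat \<Rightarrow> nat \<Rightarrow> nat) \<Rightarrow> complex mat \<Rightarrow> complex mat \<Rightarrow> bool" where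
  "acts_blockwise N s n idx K A \<longleftrightarrow> K \<in> carrier_mat N N \<and> (\<forall>v\<in>carrier_vec N. \<forall>j<s. \<forall>i<n.
     (K *\<^sub>v v) $ idx j i = (\<Sum>i'<n. A $$ (i,i') * v $ idx j i'))"

text \<open>A matrix family acting blockwise as a jointly injective (resp. jointly spanning) family is
  itself jointly injective (resp. jointly spanning): the first because each block of a common
  null vector is a common null vector of the \<open>A x\<close>, the second by embedding block by block.\<close>

lemma blockwise_jointly_injective:
  assumes I: "block_indexing N s n idx blk pos" and A: "\<And>x. x \<in> X \<Longrightarrow> A x \<in> carrier_mat n n"
    and K: "\<And>x. x \<in> X \<Longrightarrow> acts_blockwise N s n idx (K x) (A x)"
    and inj: "jointly_injective X n A"
  shows "jointly_injective X N K"
  unfolding jointly_injective_def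
proof (intro ballI impI)
  fix v assume v: "v \<in> carrier_vec N" and Kv: "\<forall>x\<in>X. K x *\<^sub>v v = 0\<^sub>v N"
  have block_zero: "v $ idx j i = 0" if j: "j < s" and i: "i < n" for j i
  proof -
    define a where "a = vec n (\<lambda>i. v $ idx j i)"
    have a_carrier: "a \<in> carrier_vec n" by (simp add: a_def)
    have "A x *\<^sub>v a = 0\<^sub>v n" if x: "x \<in> X" for x
    proof (rule eq_vecI)
      fix q assume "q < dim_vec (0\<^sub>v n)"
      then have q: "q < n" by simp
      have "(A x *\<^sub>v a) $ q = (K x *\<^sub>v v) $ idx j q"
        using mat_vec_entry[OF A[OF x], of a q] K[OF x] v j q by (simp add: a_def acts_blockwise_def)
      also have "\<dots> = 0" using Kv x block_indexing_idx[OF I j q] by simp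
      finally show "(A x *\<^sub>v a) $ q = 0\<^sub>v n $ q" using q by simp
    qed (use A[OF x] in auto)
    then have "a = 0\<^sub>v n" using inj a_carrier unfolding jointly_injective_def by blast
    then have "a $ i = 0" using i by simp
    then show ?thesis using i by (simp add: a_def)
  qed
  show "v = 0\<^sub>v N"
  proof (rule eq_vecI)
    fix m assume "m < dim_vec (0\<^sub>v N)"
    then have m: "m < N" by simp
    then show "v $ m = 0\<^sub>v N $ m" using block_indexing_blk[OF I m] block_zero[of "blk m" "pos m"] by simp
  qed (use v in auto)
qed

definition block_embed :: "nat \<Rightarrow> (nat \<Rightarrow> nat) \<Rightarrow> (nat \<Rightarrow> nat) \<Rightarrow> nat \<Rightarrow> complex vec \<Rightarrow> complex vec" where
  "block_embed N blk pos j a = vec N (\<lambda>m. if blk m = j then a $ pos m else 0)"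

lemma block_embed_preimage_subspace:
  assumes I: "block_indexing N s n idx blk pos" and S: "cvsubspace N S"
  shows "cvsubspace n {b \<in> carrier_vec n. block_embed N blk pos j b \<in> S}"
proof -
  have "block_embed N blk pos j (0\<^sub>v n) = 0\<^sub>v N"
    by (rule eq_vecI) (auto simp: block_embed_def dest: block_indexing_blk[OF I])
  moreover have "block_embed N blk pos j (b + c) = block_embed N blk pos j b + block_embed N blk pos j c"
    if "b \<in> carrier_vec n" "c \<in> carrier_vec n" for b c
    by (rule eq_vecI) (use that in \<open>auto simp: block_embed_def dest: block_indexing_blk[OF I]\<close>)
  moreover have "block_embed N blk pos j (z \<cdot>\<^sub>v b) = z \<cdot>\<^sub>v block_embed N blk pos j b"
    if "b \<in> carrier_vec n" for b z
    by (rule eq_vecI) (use that in \<open>auto simp: block_embed_def dest: block_indexing_blk[OF I]\<close>)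
  ultimately show ?thesis
    using cvsubspace_zero[OF S] cvsubspace_add[OF S] cvsubspace_smult[OF S] unfolding cvsubspace_def by auto
qed

lemma acts_blockwise_block_embed:
  assumes I: "block_indexing N s n idx blk pos" and K: "acts_blockwise N s n idx K A"
    and A: "A \<in> carrier_mat n n" and a: "a \<in> carrier_vec n" and j: "j < s"
  shows "K *\<^sub>v block_embed N blk pos j a = block_embed N blk pos j (A *\<^sub>v a)"
proof (rule eq_vecI)
  fix m assume "m < dim_vec (block_embed N blk pos j (A *\<^sub>v a))"
  then have m: "m < N" by (simp add: block_embed_def)
  then have bm: "blk m < s" "pos m < n" and mi: "idx (blk m) (pos m) = m"
    using block_indexing_blk[OF I m] by auto
  have embed_idx: "block_embed N blk pos j a $ idx (blk m) i = (if blk m = j then a $ i else 0)" if "i < n" for i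
    using block_indexing_idx[OF I bm(1) that] by (auto simp: block_embed_def)
  have "(K *\<^sub>v block_embed N blk pos j a) $ m = (K *\<^sub>v block_embed N blk pos j a) $ idx (blk m) (pos m)"
    using mi by simp
  also have "\<dots> = (\<Sum>i'<n. A $$ (pos m, i') * block_embed N blk pos j a $ idx (blk m) i')"
    using K bm unfolding acts_blockwise_def by (simp add: block_embed_def)
  also have "\<dots> = (\<Sum>i'<n. A $$ (pos m, i') * (if blk m = j then a $ i' else 0))"
    by (intro sum.cong) (auto simp: embed_idx)
  also have "\<dots> = block_embed N blk pos j (A *\<^sub>v a) $ m"
    using m bm mat_vec_entry[OF A a, of "pos m"] by (auto simp: block_embed_def)
  finally show "(K *\<^sub>v block_embed N blk pos j a) $ m = block_embed N blk pos j (A *\<^sub>v a) $ m" .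
qed (use K in \<open>auto simp: block_embed_def acts_blockwise_def\<close>)

text \<open>Every vector is the sum of its blocks, so a subspace containing all block embeddings is
  everything.\<close>

lemma block_embeddings_span:
  assumes I: "block_indexing N s n idx blk pos" and S: "cvsubspace N S"
    and embed: "\<And>j a. j < s \<Longrightarrow> a \<in> carrier_vec n \<Longrightarrow> block_embed N blk pos j a \<in> S"
  shows "S = carrier_vec N"
proof -
  define trunc where "trunc t w = vec N (\<lambda>m. if blk m < t then w $ m else 0)" for t and w :: "complex vec"
  have trunc_in_S: "trunc t w \<in> S" if w: "w \<in> carrier_vec N" and t: "t \<le> s" for t w
    using t
  proof (induction t)
    case 0
    have "trunc 0 w = 0\<^sub>v N" by (rule eq_vecI) (auto simp: trunc_def)
    then show ?case using cvsubspace_zero[OF S] by simp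
  next
    case (Suc t)
    define a where "a = vec n (\<lambda>i. w $ idx t i)"
    have "trunc (Suc t) w = trunc t w + block_embed N blk pos t a"
    proof (rule eq_vecI)
      fix m assume "m < dim_vec (trunc t w + block_embed N blk pos t a)"
      then have "m < N" by (simp add: block_embed_def)
      then show "trunc (Suc t) w $ m = (trunc t w + block_embed N blk pos t a) $ m"
        using block_indexing_blk[OF I, of m] by (auto simp: trunc_def block_embed_def a_def)
    qed (simp add: trunc_def block_embed_def)
    then show ?case using Suc embed[of t a] cvsubspace_add[OF S] by (simp add: a_def)
  qed
  have "trunc s w = w" if "w \<in> carrier_vec N" for w
    by (rule eq_vecI) (use that in \<open>auto simp: trunc_def dest: block_indexing_blk[OF I]\<close>)
  then have "carrier_vec N \<subseteq> S" using trunc_in_S[OF _ order_refl] by auto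
  then show ?thesis using S unfolding cvsubspace_def by blast
qed

lemma blockwise_jointly_spanning:
  assumes I: "block_indexing N s n idx blk pos" and A: "\<And>x. x \<in> X \<Longrightarrow> A x \<in> carrier_mat n n"
    and K: "\<And>x. x \<in> X \<Longrightarrow> acts_blockwise N s n idx (K x) (A x)"
    and span: "jointly_spanning X n A"
  shows "jointly_spanning X N K"
  unfolding jointly_spanning_def
proof (intro allI impI)
  fix S assume "cvsubspace N S \<and> (\<forall>x\<in>X. \<forall>u\<in>carrier_vec N. K x *\<^sub>v u \<in> S)"
  then have S: "cvsubspace N S" and KS: "\<And>x u. x \<in> X \<Longrightarrow> u \<in> carrier_vec N \<Longrightarrow> K x *\<^sub>v u \<in> S"
    by auto
  have "block_embed N blk pos j a \<in> S" if j: "j < s" and a: "a \<in> carrier_vec n" for j a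
  proof -
    let ?Sj = "{b \<in> carrier_vec n. block_embed N blk pos j b \<in> S}"
    have "A x *\<^sub>v u \<in> ?Sj" if "x \<in> X" "u \<in> carrier_vec n" for x u
      using KS[of x "block_embed N blk pos j u"] acts_blockwise_block_embed[OF I K A that(2) j]
        mult_mat_vec_carrier[OF A that(2)] that by (auto simp: block_embed_def)
    then have "?Sj = carrier_vec n"
      using span block_embed_preimage_subspace[OF I S] unfolding jointly_spanning_def by blast
    then show ?thesis using a by blast
  qed
  then show "S = carrier_vec N" by (rule block_embeddings_span[OF I S])
qed

lemma blockwise_nondegenerate:
  assumes "block_indexing N s n idx blk pos" and "\<And>x. x \<in> X \<Longrightarrow> A x \<in> carrier_mat n n"
    and "\<And>x. x \<in> X \<Longrightarrow> acts_blockwise N s n idx (K x) (A x)"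
    and "nondegenerate X n A"
  shows "nondegenerate X N K"
  using assms blockwise_jointly_injective blockwise_jointly_spanning
  unfolding nondegenerate_def by metis

lemma kron_dims [simp]:
  "dim_row (kron A B) = dim_row A * dim_row B" "dim_col (kron A B) = dim_col A * dim_col B"
  by (simp_all add: kron_def)

lemma kron_carrier:
  "A \<in> carrier_mat a a' \<Longrightarrow> B \<in> carrier_mat b b' \<Longrightarrow> kron A B \<in> carrier_mat (a*b) (a'*b')"
  by (auto simp: kron_def)

lemma kron_index:
  "i < dim_row A * dim_row B \<Longrightarrow> j < dim_col A * dim_col B \<Longrightarrow>
     kron A B $$ (i,j) = A $$ (i div dim_row B, j div dim_col B) * B $$ (i mod dim_row B, j mod dim_col B)"
  by (simp add: kron_def)

lemma block_index_bound: "q < (k::nat) \<Longrightarrow> t < r \<Longrightarrow> q*r+t < k*r"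
proof -
  assume q: "q < k" and t: "t < r"
  have "q*r + t < (q+1)*r" using t by simp
  also have "(q+1)*r \<le> k*r" using q by (intro mult_right_mono) auto
  finally show ?thesis .
qed

lemma index_div_mod: "i < k*(r::nat) \<Longrightarrow> i div r < k \<and> i mod r < r \<and> (i div r)*r + i mod r = i"
proof -
  assume i: "i < k*r"
  then have "r > 0" by (cases r) auto
  then show ?thesis using i by (auto simp: less_mult_imp_div_less)
qed

lemma sum_split_blocks:
  fixes g :: "nat \<Rightarrow> complex"
  shows "(\<Sum>j<k*r. g j) = (\<Sum>p<k. \<Sum>t<r. g (p*r+t))"
proof -
  have "(\<Sum>j<k*r. g j) = (\<Sum>p<k. sum g {p*r..<p*r+r})" using sum.nat_group[of g r k] by simp
  also have "\<dots> = (\<Sum>p<k. \<Sum>t<r. g (p*r+t))"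
  proof (rule sum.cong[OF refl])
    fix p
    have "sum g {0 + p*r..<r + p*r} = (\<Sum>t=0..<r. g (t + p*r))" by (rule sum.shift_bounds_nat_ivl)
    then show "sum g {p*r..<p*r+r} = (\<Sum>t<r. g (p*r+t))" by (simp add: add.commute atLeast0LessThan)
  qed
  finally show ?thesis .
qed

text \<open>Index \<open>p*r+t\<close> of \<open>C^(k*r) = C^k \<otimes> C^r\<close> stands for the basis vector \<open>e_p \<otimes> e_t\<close>.
  Grouping by the second factor, \<open>A \<otimes> 1\<close> acts as \<open>A\<close> on each of the \<open>r\<close> blocks;
  grouping by the first factor, \<open>1 \<otimes> B\<close> acts as \<open>B\<close> on each of the \<open>k\<close> blocks.\<close>

lemma block_indexing_second_factor:
  "block_indexing (k*r) r k (\<lambda>t p. p*r+t) (\<lambda>m. m mod r) (\<lambda>m. m div r)"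
  unfolding block_indexing_def
proof (rule conjI; intro allI impI)
  show "p*r+t < k*r \<and> (p*r+t) mod r = t \<and> (p*r+t) div r = p" if "t < r" "p < k" for t p
    using that block_index_bound[of p k t r] by simp
  show "m mod r < r \<and> m div r < k \<and> (m div r)*r + m mod r = m" if "m < k*r" for m
    using index_div_mod[OF that] by simp
qed

lemma block_indexing_first_factor:
  "block_indexing (k*r) k r (\<lambda>q t. q*r+t) (\<lambda>m. m div r) (\<lambda>m. m mod r)"
  unfolding block_indexing_def
proof (rule conjI; intro allI impI)
  show "q*r+t < k*r \<and> (q*r+t) div r = q \<and> (q*r+t) mod r = t" if "q < k" "t < r" for q t
    using that block_index_bound[of q k t r] by simp
  show "m div r < k \<and> m mod r < r \<and> (m div r)*r + m mod r = m" if "m < k*r" for m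
    using index_div_mod[OF that] by simp
qed

lemma kron_id_right_acts_blockwise:
  fixes A :: "complex mat"
  assumes A: "A \<in> carrier_mat k k"
  shows "acts_blockwise (k*r) r k (\<lambda>t p. p*r+t) (kron A (1\<^sub>m r)) A"
  unfolding acts_blockwise_def
proof (intro conjI ballI allI impI)
  show "kron A (1\<^sub>m r) \<in> carrier_mat (k*r) (k*r)" using A by (auto intro: kron_carrier)
next
  fix v :: "complex vec" and t q assume v: "v \<in> carrier_vec (k*r)" and t: "t < r" and q: "q < k"
  have i: "q*r+t < k*r" using q t by (rule block_index_bound)
  have "(kron A (1\<^sub>m r) *\<^sub>v v) $ (q*r+t) = (\<Sum>j<k*r. kron A (1\<^sub>m r) $$ (q*r+t, j) * v $ j)"
    using A v i by (simp add: mult_mat_vec_def scalar_prod_def atLeast0LessThan)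
  also have "\<dots> = (\<Sum>p<k. \<Sum>t'<r. kron A (1\<^sub>m r) $$ (q*r+t, p*r+t') * v $ (p*r+t'))"
    by (rule sum_split_blocks)
  also have "\<dots> = (\<Sum>p<k. \<Sum>t'<r. (if t' = t then A $$ (q,p) * v $ (p*r+t) else 0))"
  proof (intro sum.cong refl)
    fix p t' assume p: "p \<in> {..<k}" and t': "t' \<in> {..<r}"
    have j: "p*r+t' < k*r" using p t' by (intro block_index_bound) auto
    show "kron A (1\<^sub>m r) $$ (q*r+t, p*r+t') * v $ (p*r+t') = (if t' = t then A $$ (q,p) * v $ (p*r+t) else 0)"
      using A i j t t' by (simp add: kron_index)
  qed
  also have "\<dots> = (\<Sum>p<k. A $$ (q,p) * v $ (p*r+t))" using t by simp
  finally show "(kron A (1\<^sub>m r) *\<^sub>v v) $ (q*r+t) = (\<Sum>p<k. A $$ (q,p) * v $ (p*r+t))" .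
qed

lemma kron_id_left_acts_blockwise:
  fixes B :: "complex mat"
  assumes B: "B \<in> carrier_mat r r"
  shows "acts_blockwise (k*r) k r (\<lambda>q t. q*r+t) (kron (1\<^sub>m k) B) B"
  unfolding acts_blockwise_def
proof (intro conjI ballI allI impI)
  show "kron (1\<^sub>m k) B \<in> carrier_mat (k*r) (k*r)" using B by (auto intro: kron_carrier)
next
  fix v :: "complex vec" and q t assume v: "v \<in> carrier_vec (k*r)" and q: "q < k" and t: "t < r"
  have i: "q*r+t < k*r" using q t by (rule block_index_bound)
  have "(kron (1\<^sub>m k) B *\<^sub>v v) $ (q*r+t) = (\<Sum>j<k*r. kron (1\<^sub>m k) B $$ (q*r+t, j) * v $ j)"
    using B v i by (simp add: mult_mat_vec_def scalar_prod_def atLeast0LessThan)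
  also have "\<dots> = (\<Sum>p<k. \<Sum>t'<r. kron (1\<^sub>m k) B $$ (q*r+t, p*r+t') * v $ (p*r+t'))"
    by (rule sum_split_blocks)
  also have "\<dots> = (\<Sum>p<k. if p = q then (\<Sum>t'<r. B $$ (t,t') * v $ (q*r+t')) else 0)"
  proof (intro sum.cong refl)
    fix p assume p: "p \<in> {..<k}"
    have "kron (1\<^sub>m k) B $$ (q*r+t, p*r+t') = (if p = q then B $$ (t,t') else 0)" if t': "t' < r" for t'
      using B i block_index_bound[OF _ t', of p k] p t t' q by (simp add: kron_index)
    then show "(\<Sum>t'<r. kron (1\<^sub>m k) B $$ (q*r+t, p*r+t') * v $ (p*r+t')) =
        (if p = q then (\<Sum>t'<r. B $$ (t,t') * v $ (q*r+t')) else 0)"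
      by (cases "p = q") simp_all
  qed
  also have "\<dots> = (\<Sum>t'<r. B $$ (t,t') * v $ (q*r+t'))" using q by simp
  finally show "(kron (1\<^sub>m k) B *\<^sub>v v) $ (q*r+t) = (\<Sum>t'<r. B $$ (t,t') * v $ (q*r+t'))" .
qed

lemma nondegenerate_kron_id_right:
  assumes "\<And>x. x \<in> X \<Longrightarrow> A x \<in> carrier_mat k k" and "nondegenerate X k A"
  shows "nondegenerate X (k*r) (\<lambda>x. kron (A x) (1\<^sub>m r))"
  by (rule blockwise_nondegenerate[OF block_indexing_second_factor])
    (use assms kron_id_right_acts_blockwise in auto)

lemma nondegenerate_kron_id_left:
  assumes "\<And>x. x \<in> X \<Longrightarrow> B x \<in> carrier_mat r r" and "nondegenerate X r B"
  shows "nondegenerate X (k*r) (\<lambda>x. kron (1\<^sub>m k) (B x))"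
  by (rule blockwise_nondegenerate[OF block_indexing_first_factor])
    (use assms kron_id_left_acts_blockwise in auto)

section \<open>Nontrivial simple \<open>g\<close>-modules are nondegenerate\<close>

lemma g_rep_carrier: "g_rep d br n \<rho> \<Longrightarrow> x \<in> carrier_vec d \<Longrightarrow> \<rho> x \<in> carrier_mat n n"
  by (simp add: g_rep_def)

lemma nonzero_operator_witness:
  fixes \<rho> :: "complex mat"
  assumes "\<rho> \<in> carrier_mat n n" and "\<rho> \<noteq> 0\<^sub>m n n"
  shows "\<exists>v\<in>carrier_vec n. \<rho> *\<^sub>v v \<noteq> 0\<^sub>v n"
proof (rule ccontr)
  assume "\<not> ?thesis"
  then have "\<rho> = 0\<^sub>m n n" by (intro mat_eq_by_vec[OF assms(1)]) auto
  with assms(2) show False ..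
qed

text \<open>Any subspace containing the images of all operators is a submodule; by simplicity and
  nontriviality it is everything.\<close>

lemma simple_jointly_spanning:
  assumes rep: "g_rep d br n \<rho>" and simple: "g_simple d n \<rho>"
    and nontriv: "\<exists>x\<in>carrier_vec d. \<rho> x \<noteq> 0\<^sub>m n n"
  shows "jointly_spanning (carrier_vec d) n \<rho>"
  unfolding jointly_spanning_def
proof (intro allI impI)
  fix S assume "cvsubspace n S \<and> (\<forall>x\<in>carrier_vec d. \<forall>u\<in>carrier_vec n. \<rho> x *\<^sub>v u \<in> S)"
  then have S: "cvsubspace n S" and img: "\<And>x u. x \<in> carrier_vec d \<Longrightarrow> u \<in> carrier_vec n \<Longrightarrow> \<rho> x *\<^sub>v u \<in> S"
    by auto
  have "S = {0\<^sub>v n} \<or> S = carrier_vec n"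
    using simple S img cvsubspace_carrier[OF S] unfolding g_simple_def by blast
  moreover obtain x v where "x \<in> carrier_vec d" "v \<in> carrier_vec n" "\<rho> x *\<^sub>v v \<noteq> 0\<^sub>v n"
    using nontriv nonzero_operator_witness g_rep_carrier[OF rep] by metis
  then have "S \<noteq> {0\<^sub>v n}" using img by blast
  ultimately show "S = carrier_vec n" by blast
qed

text \<open>The common kernel of all operators is a submodule (by the bracket relation); by simplicity
  and nontriviality it is zero.\<close>

lemma simple_jointly_injective:
  assumes lie: "lie_algebra d br" and rep: "g_rep d br n \<rho>" and simple: "g_simple d n \<rho>"
    and nontriv: "\<exists>x\<in>carrier_vec d. \<rho> x \<noteq> 0\<^sub>m n n"
  shows "jointly_injective (carrier_vec d) n \<rho>"
  unfolding jointly_injective_def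
proof (intro ballI impI)
  have carr: "\<And>x. x \<in> carrier_vec d \<Longrightarrow> \<rho> x \<in> carrier_mat n n" using g_rep_carrier[OF rep] .
  have br_carr: "\<And>x y. x \<in> carrier_vec d \<Longrightarrow> y \<in> carrier_vec d \<Longrightarrow> br x y \<in> carrier_vec d"
    using lie by (simp add: lie_algebra_def)
  have br_rep: "\<And>x y. x \<in> carrier_vec d \<Longrightarrow> y \<in> carrier_vec d \<Longrightarrow> \<rho> (br x y) = \<rho> x * \<rho> y - \<rho> y * \<rho> x"
    using rep by (simp add: g_rep_def)
  define K where "K = {w \<in> carrier_vec n. \<forall>x\<in>carrier_vec d. \<rho> x *\<^sub>v w = 0\<^sub>v n}"
  have K_subspace: "cvsubspace n K"
    unfolding cvsubspace_def K_def
    by (auto simp: mult_add_distrib_mat_vec[OF carr] mult_mat_vec[OF carr] carr)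
  have K_invariant: "\<rho> y *\<^sub>v w \<in> K" if y: "y \<in> carrier_vec d" and w: "w \<in> K" for y w
  proof -
    have wc: "w \<in> carrier_vec n" using w K_def by auto
    have "\<rho> x *\<^sub>v (\<rho> y *\<^sub>v w) = 0\<^sub>v n" if x: "x \<in> carrier_vec d" for x
    proof -
      have comm: "\<rho> x * \<rho> y = \<rho> (br x y) + \<rho> y * \<rho> x"
        using br_rep[OF x y] carr[OF x] carr[OF y] by (intro eq_matI) auto
      have "\<rho> x *\<^sub>v (\<rho> y *\<^sub>v w) = (\<rho> x * \<rho> y) *\<^sub>v w" using carr[OF x] carr[OF y] wc by simp
      also have "\<dots> = \<rho> (br x y) *\<^sub>v w + \<rho> y *\<^sub>v (\<rho> x *\<^sub>v w)"
        unfolding comm using carr[OF x] carr[OF y] carr[OF br_carr[OF x y]] wc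
        by (simp add: add_mult_distrib_mat_vec[of _ n n])
      also have "\<dots> = 0\<^sub>v n" using w x y br_carr carr[OF y] unfolding K_def by simp
      finally show ?thesis .
    qed
    then show ?thesis using carr[OF y] wc unfolding K_def by auto
  qed
  have "K = {0\<^sub>v n} \<or> K = carrier_vec n"
    using simple K_subspace K_invariant unfolding g_simple_def by blast
  moreover obtain x v where "x \<in> carrier_vec d" "v \<in> carrier_vec n" "\<rho> x *\<^sub>v v \<noteq> 0\<^sub>v n"
    using nontriv nonzero_operator_witness carr by metis
  then have "K \<noteq> carrier_vec n" unfolding K_def by blast
  ultimately have K0: "K = {0\<^sub>v n}" by blast
  fix v assume "v \<in> carrier_vec n" and "\<forall>x\<in>carrier_vec d. \<rho> x *\<^sub>v v = 0\<^sub>v n"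
  then show "v = 0\<^sub>v n" using K0 unfolding K_def by blast
qed

lemma simple_nondegenerate:
  "lie_algebra d br \<Longrightarrow> g_rep d br n \<rho> \<Longrightarrow> g_simple d n \<rho> \<Longrightarrow> \<exists>x\<in>carrier_vec d. \<rho> x \<noteq> 0\<^sub>m n n
    \<Longrightarrow> nondegenerate (carrier_vec d) n \<rho>"
  by (simp add: nondegenerate_def simple_jointly_spanning simple_jointly_injective)

section \<open>Maximal ideals, evaluation and separating elements\<close>

lemma ring_ideal_mult: "ring_ideal I \<Longrightarrow> x \<in> I \<Longrightarrow> a * x \<in> I"
  and ring_ideal_mult_right: "ring_ideal I \<Longrightarrow> x \<in> I \<Longrightarrow> x * a \<in> I"
  and ring_ideal_add: "ring_ideal I \<Longrightarrow> x \<in> I \<Longrightarrow> y \<in> I \<Longrightarrow> x + y \<in> I"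
  by (simp_all add: ring_ideal_def mult.commute)

lemma ring_ideal_neg: "ring_ideal I \<Longrightarrow> x \<in> I \<Longrightarrow> - x \<in> I"
  using ring_ideal_mult[of I x "-1"] by simp

lemma ring_ideal_diff: "ring_ideal I \<Longrightarrow> x \<in> I \<Longrightarrow> y \<in> I \<Longrightarrow> x - y \<in> I"
  using ring_ideal_add[of I x "-y"] ring_ideal_neg[of I y] by simp

lemma max_ideal_ring_ideal: "max_ideal m \<Longrightarrow> ring_ideal m"
  by (simp add: max_ideal_def)

lemma calg_hom_diff: "calg_hom emb \<Longrightarrow> emb (x - y) = emb x - emb y"
proof -
  assume h: "calg_hom emb"
  have "emb ((x - y) + y) = emb (x - y) + emb y" using h unfolding calg_hom_def by blast
  then show ?thesis by (simp add: algebra_simps)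
qed

text \<open>Evaluation at a maximal ideal is well defined: \<open>a - c\<close> lies in \<open>m\<close> for at most one scalar
  \<open>c\<close>, since otherwise the nonzero scalar \<open>c - c'\<close>, a unit, would lie in \<open>m\<close>.\<close>

lemma eval_at_eq:
  assumes h: "calg_hom emb" and m: "max_ideal m" and a: "a - emb c \<in> m"
  shows "eval_at emb m a = c"
  unfolding eval_at_def
proof (rule the_equality)
  show "a - emb c \<in> m" by (rule a)
  fix c' assume a': "a - emb c' \<in> m"
  have ri: "ring_ideal m" using m by (rule max_ideal_ring_ideal)
  have "(a - emb c') - (a - emb c) = emb (c - c')" by (simp add: calg_hom_diff[OF h])
  then have "emb (c - c') \<in> m" using ring_ideal_diff[OF ri a' a] by simp
  show "c' = c"
  proof (rule ccontr)
    assume ne: "c' \<noteq> c"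
    have "emb (c - c') * emb (1 / (c - c')) = emb 1" using h ne unfolding calg_hom_def by (metis field_class.field_divide_inverse mult.commute mult.left_neutral right_inverse right_minus_eq)
    moreover have "emb (c - c') * emb (1 / (c - c')) \<in> m"
      using ring_ideal_mult_right[OF ri \<open>emb (c - c') \<in> m\<close>] .
    ultimately have "1 \<in> m" using h by (simp add: calg_hom_def)
    then have "y \<in> m" for y using ring_ideal_mult[OF ri, of 1 y] by simp
    then show False using m by (auto simp: max_ideal_def)
  qed
qed

lemma eval_at_zero: "calg_hom emb \<Longrightarrow> max_ideal m \<Longrightarrow> a \<in> m \<Longrightarrow> eval_at emb m a = 0"
  using eval_at_eq[of emb m a 0] calg_hom_diff[of emb 0 0] by simp

lemma eval_at_one: "calg_hom emb \<Longrightarrow> max_ideal m \<Longrightarrow> a - 1 \<in> m \<Longrightarrow> eval_at emb m a = 1"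
  using eval_at_eq[of emb m a 1] by (simp add: calg_hom_def)

lemma comaximal:
  assumes m: "max_ideal m" and m1: "max_ideal m1" and ne: "m \<noteq> m1"
  shows "\<exists>q\<in>m. q - 1 \<in> m1"
proof -
  have ri: "ring_ideal m" and ri1: "ring_ideal m1" using m m1 by (simp_all add: max_ideal_ring_ideal)
  define J where "J = {x + y |x y. x \<in> m \<and> y \<in> m1}"
  have "ring_ideal J" unfolding ring_ideal_def
  proof (intro conjI ballI allI)
    show "0 \<in> J" using ri ri1 unfolding J_def ring_ideal_def by force
  next
    fix z w assume "z \<in> J" "w \<in> J"
    then obtain x y x' y' where "z = x + y" "x \<in> m" "y \<in> m1" "w = x' + y'" "x' \<in> m" "y' \<in> m1"
      unfolding J_def by blast
    then have "z + w = (x + x') + (y + y')" "x + x' \<in> m" "y + y' \<in> m1"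
      using ring_ideal_add[OF ri] ring_ideal_add[OF ri1] by (auto simp: algebra_simps)
    then show "z + w \<in> J" unfolding J_def by blast
  next
    fix a z assume "z \<in> J"
    then obtain x y where "z = x + y" "x \<in> m" "y \<in> m1" unfolding J_def by blast
    then have "a * z = a * x + a * y" "a * x \<in> m" "a * y \<in> m1"
      using ring_ideal_mult[OF ri] ring_ideal_mult[OF ri1] by (simp_all add: distrib_left)
    then show "a * z \<in> J" unfolding J_def by blast
  qed
  moreover have "m1 \<subseteq> J" unfolding J_def using ri by (force simp: ring_ideal_def)
  moreover have "J \<noteq> m1"
  proof
    assume "J = m1"
    then have "m \<subseteq> m1" unfolding J_def using ri1 by (force simp: ring_ideal_def)
    then show False using m ri1 ne m1 unfolding max_ideal_def by blast
  qed
  ultimately have "1 \<in> J" using m1 unfolding max_ideal_def by blast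
  then obtain x y where "1 = x + y" "x \<in> m" "y \<in> m1" unfolding J_def by blast
  then have "x - 1 = - y" by (simp add: algebra_simps)
  then show ?thesis using \<open>x \<in> m\<close> ring_ideal_neg[OF ri1 \<open>y \<in> m1\<close>] by metis
qed

lemma square_minus_one:
  assumes "ring_ideal m" and "p - 1 \<in> m"
  shows "p * p - 1 \<in> m"
proof -
  have eq: "p * p - 1 = (p - 1) * p + (p - 1)" by (simp add: algebra_simps)
  show ?thesis unfolding eq using assms by (intro ring_ideal_add ring_ideal_mult_right)
qed

lemma separating_element:
  assumes m1: "max_ideal m1" and fin: "finite S" and S: "\<And>m. m \<in> S \<Longrightarrow> max_ideal m \<and> m \<noteq> m1"
  shows "\<exists>p. p - 1 \<in> m1 \<and> (\<forall>m\<in>S. p \<in> m)"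
  using fin S
proof (induction S rule: finite_induct)
  case empty
  have "0 \<in> m1" using m1 by (simp add: max_ideal_def ring_ideal_def)
  then show ?case by (intro exI[of _ 1]) simp
next
  case (insert m S)
  then obtain p where p: "p - 1 \<in> m1" "\<forall>m\<in>S. p \<in> m" by auto
  obtain q where q: "q \<in> m" "q - 1 \<in> m1" using comaximal[of m m1] insert.prems m1 by auto
  have ri1: "ring_ideal m1" using m1 by (rule max_ideal_ring_ideal)
  have eq: "p * q - 1 = p * (q - 1) + (p - 1)" by (simp add: algebra_simps)
  have "p * (q - 1) + (p - 1) \<in> m1" using ring_ideal_add[OF ri1 ring_ideal_mult[OF ri1 q(2)] p(1)] .
  then have "p * q - 1 \<in> m1" unfolding eq .
  moreover have "\<forall>m'\<in>insert m S. p * q \<in> m'"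
    using p q insert.prems by (auto simp: max_ideal_def intro: ring_ideal_mult ring_ideal_mult_right)
  ultimately show ?case by blast
qed

lemma kron_zero_id: "kron (0\<^sub>m k k) (1\<^sub>m r) = (0\<^sub>m (k*r) (k*r) :: complex mat)"
proof (rule eq_matI)
  fix i j assume "i < dim_row (0\<^sub>m (k*r) (k*r) :: complex mat)" "j < dim_col (0\<^sub>m (k*r) (k*r) :: complex mat)"
  then show "kron (0\<^sub>m k k) (1\<^sub>m r) $$ (i,j) = (0\<^sub>m (k*r) (k*r) :: complex mat) $$ (i,j)"
    using index_div_mod[of i k r] index_div_mod[of j k r] by (simp add: kron_index)
qed auto

lemma kron_id_zero: "kron (1\<^sub>m k) (0\<^sub>m r r) = (0\<^sub>m (k*r) (k*r) :: complex mat)"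
proof (rule eq_matI)
  fix i j assume "i < dim_row (0\<^sub>m (k*r) (k*r) :: complex mat)" "j < dim_col (0\<^sub>m (k*r) (k*r) :: complex mat)"
  then show "kron (1\<^sub>m k) (0\<^sub>m r r) $$ (i,j) = (0\<^sub>m (k*r) (k*r) :: complex mat) $$ (i,j)"
    using index_div_mod[of i k r] index_div_mod[of j k r] by (simp add: kron_index)
qed auto

lemma smult_zero_mat: "(A::complex mat) \<in> carrier_mat k k \<Longrightarrow> 0 \<cdot>\<^sub>m A = 0\<^sub>m k k"
  and smult_one_mat: "1 \<cdot>\<^sub>m (A::complex mat) = A"
  by (rule eq_matI; auto)+

lemma Vpi_Nil: "Vpi emb [] = trivial_mod"
  by (simp add: Vpi_def)

lemma Vpi_Cons_dim: "fst (Vpi emb ((m,V)#ps)) = fst V * fst (Vpi emb ps)"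
  by (simp add: Vpi_def tensor_mod_def eval_mod_def)

lemma Vpi_Cons_action: "snd (Vpi emb ((m,V)#ps)) a x =
   kron (eval_at emb m a \<cdot>\<^sub>m snd V x) (1\<^sub>m (fst (Vpi emb ps))) + kron (1\<^sub>m (fst V)) (snd (Vpi emb ps) a x)"
  by (simp add: Vpi_def tensor_mod_def eval_mod_def)

lemma valid_pi_Cons:
  "valid_pi d br ((m,V)#ps) \<longleftrightarrow> m \<notin> fst ` set ps \<and> max_ideal m \<and> g_rep d br (fst V) (snd V) \<and>
     g_simple d (fst V) (snd V) \<and> (\<exists>x\<in>carrier_vec d. snd V x \<noteq> 0\<^sub>m (fst V) (fst V)) \<and> valid_pi d br ps"
  by (auto simp: valid_pi_def)

lemma valid_pi_reps: "valid_pi d br ps \<Longrightarrow> \<forall>(m,V)\<in>set ps. max_ideal m \<and> g_rep d br (fst V) (snd V)"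
  and valid_pi_g_rep: "valid_pi d br ps \<Longrightarrow> \<forall>(m,V)\<in>set ps. g_rep d br (fst V) (snd V)"
  by (auto simp: valid_pi_def)

lemma Vpi_carrier:
  assumes "\<forall>(m,V)\<in>set ps. g_rep d br (fst V) (snd V)" and x: "x \<in> carrier_vec d"
  shows "snd (Vpi emb ps) a x \<in> carrier_mat (fst (Vpi emb ps)) (fst (Vpi emb ps))"
  using assms(1)
proof (induction ps)
  case Nil then show ?case by (simp add: Vpi_Nil trivial_mod_def)
next
  case (Cons p ps)
  obtain m V where p: "p = (m,V)" by (cases p)
  have "snd V x \<in> carrier_mat (fst V) (fst V)" using Cons.prems x p by (auto simp: g_rep_def)
  then show ?case using Cons p by (auto simp: Vpi_Cons_dim Vpi_Cons_action intro!: kron_carrier)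
qed

lemma Vpi_vanishes:
  assumes h: "calg_hom emb" and ps: "\<forall>(m,V)\<in>set ps. max_ideal m \<and> g_rep d br (fst V) (snd V)"
    and a: "\<forall>m\<in>fst ` set ps. a \<in> m" and x: "x \<in> carrier_vec d"
  shows "snd (Vpi emb ps) a x = 0\<^sub>m (fst (Vpi emb ps)) (fst (Vpi emb ps))"
  using ps a
proof (induction ps)
  case Nil then show ?case by (simp add: Vpi_Nil trivial_mod_def)
next
  case (Cons p ps)
  obtain m V where p: "p = (m,V)" by (cases p)
  have "snd V x \<in> carrier_mat (fst V) (fst V)" using Cons.prems x p by (auto simp: g_rep_def)
  moreover have "eval_at emb m a = 0" using eval_at_zero[OF h, of m a] Cons.prems p by auto
  moreover have "snd (Vpi emb ps) a x = 0\<^sub>m (fst (Vpi emb ps)) (fst (Vpi emb ps))" using Cons p by auto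
  ultimately show ?case
    using p by (simp add: Vpi_Cons_dim Vpi_Cons_action smult_zero_mat kron_zero_id kron_id_zero)
qed

lemma Vpi_Cons_action_one:
  assumes "snd V x \<in> carrier_mat (fst V) (fst V)" and "eval_at emb m e = 1"
    and "snd (Vpi emb ps) e x = 0\<^sub>m (fst (Vpi emb ps)) (fst (Vpi emb ps))"
  shows "snd (Vpi emb ((m,V)#ps)) e x = kron (snd V x) (1\<^sub>m (fst (Vpi emb ps)))"
  using assms by (simp add: Vpi_Cons_action smult_one_mat kron_id_zero kron_carrier)

lemma Vpi_Cons_action_zero:
  assumes "snd V x \<in> carrier_mat (fst V) (fst V)" and "eval_at emb m e = 0"
    and "snd (Vpi emb ps) e x \<in> carrier_mat (fst (Vpi emb ps)) (fst (Vpi emb ps))"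
  shows "snd (Vpi emb ((m,V)#ps)) e x = kron (1\<^sub>m (fst V)) (snd (Vpi emb ps) e x)"
  using assms by (simp add: Vpi_Cons_action smult_zero_mat kron_zero_id kron_carrier)

text \<open>If \<open>e \<equiv> 1\<close> at the first point and \<open>e\<close> lies in all later points, the operators \<open>e \<otimes> x\<close>
  act as \<open>x\<close> on the simple first factor, tensored with an identity: a nondegenerate family.\<close>

lemma Vpi_nondegenerate_head:
  assumes h: "calg_hom emb" and lie: "lie_algebra d br" and valid: "valid_pi d br ((m,V)#ps)"
    and e1: "e - 1 \<in> m" and e0: "\<forall>m'\<in>fst ` set ps. e \<in> m'"
  shows "nondegenerate (carrier_vec d) (fst (Vpi emb ((m,V)#ps))) (\<lambda>x. snd (Vpi emb ((m,V)#ps)) e x)"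
proof -
  have max: "max_ideal m" and V: "g_rep d br (fst V) (snd V)" "g_simple d (fst V) (snd V)"
    "\<exists>x\<in>carrier_vec d. snd V x \<noteq> 0\<^sub>m (fst V) (fst V)" and rest: "valid_pi d br ps"
    using valid by (simp_all add: valid_pi_Cons)
  have V_carr: "\<And>x. x \<in> carrier_vec d \<Longrightarrow> snd V x \<in> carrier_mat (fst V) (fst V)"
    using V(1) by (rule g_rep_carrier)
  have "snd (Vpi emb ((m,V)#ps)) e x = kron (snd V x) (1\<^sub>m (fst (Vpi emb ps)))"
    if x: "x \<in> carrier_vec d" for x
    by (rule Vpi_Cons_action_one[OF V_carr[OF x] eval_at_one[OF h max e1]
          Vpi_vanishes[OF h valid_pi_reps[OF rest] e0 x]])
  moreover have "nondegenerate (carrier_vec d) (fst V * fst (Vpi emb ps))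
      (\<lambda>x. kron (snd V x) (1\<^sub>m (fst (Vpi emb ps))))"
    using nondegenerate_kron_id_right V_carr simple_nondegenerate[OF lie V] by blast
  ultimately show ?thesis unfolding Vpi_Cons_dim by (rule nondegenerate_cong[rotated])
qed

text \<open>If \<open>e\<close> lies in the first point, \<open>e \<otimes> x\<close> acts as \<open>1 \<otimes> (e \<otimes> x)\<close>, so nondegeneracy on the
  remaining factors passes to \<open>V(\<pi>)\<close>.\<close>

lemma Vpi_nondegenerate_tail:
  assumes h: "calg_hom emb" and valid: "valid_pi d br ((m,V)#ps)" and e0: "e \<in> m"
    and nd: "nondegenerate (carrier_vec d) (fst (Vpi emb ps)) (\<lambda>x. snd (Vpi emb ps) e x)"
  shows "nondegenerate (carrier_vec d) (fst (Vpi emb ((m,V)#ps))) (\<lambda>x. snd (Vpi emb ((m,V)#ps)) e x)"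
proof -
  have max: "max_ideal m" and V: "g_rep d br (fst V) (snd V)" and rest: "valid_pi d br ps"
    using valid by (simp_all add: valid_pi_Cons)
  have rest_carr: "\<And>x. x \<in> carrier_vec d \<Longrightarrow>
      snd (Vpi emb ps) e x \<in> carrier_mat (fst (Vpi emb ps)) (fst (Vpi emb ps))"
    using valid_pi_g_rep[OF rest] by (rule Vpi_carrier)
  have "snd (Vpi emb ((m,V)#ps)) e x = kron (1\<^sub>m (fst V)) (snd (Vpi emb ps) e x)"
    if x: "x \<in> carrier_vec d" for x
    by (rule Vpi_Cons_action_zero[OF g_rep_carrier[OF V x] eval_at_zero[OF h max e0] rest_carr[OF x]])
  moreover have "nondegenerate (carrier_vec d) (fst V * fst (Vpi emb ps))
      (\<lambda>x. kron (1\<^sub>m (fst V)) (snd (Vpi emb ps) e x))"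
    using nondegenerate_kron_id_left rest_carr nd by blast
  ultimately show ?thesis unfolding Vpi_Cons_dim by (rule nondegenerate_cong[rotated])
qed

lemma Vpi_nondegenerate_at:
  assumes h: "calg_hom emb" and lie: "lie_algebra d br" and ps: "valid_pi d br ps"
    and m1: "m1 \<in> fst ` set ps" and e1: "e - 1 \<in> m1" and e0: "\<forall>m\<in>fst ` set ps. m \<noteq> m1 \<longrightarrow> e \<in> m"
  shows "nondegenerate (carrier_vec d) (fst (Vpi emb ps)) (\<lambda>x. snd (Vpi emb ps) e x)"
  using ps m1 e0
proof (induction ps)
  case Nil then show ?case by simp
next
  case (Cons p ps)
  obtain m V where p: "p = (m,V)" by (cases p)
  have fresh: "m \<notin> fst ` set ps" and rest: "valid_pi d br ps"
    using Cons.prems(1) p by (simp_all add: valid_pi_Cons)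
  show ?case
  proof (cases "m = m1")
    case True
    then have "\<forall>m'\<in>fst ` set ps. e \<in> m'" using Cons.prems(3) fresh p by auto
    then show ?thesis unfolding p using Vpi_nondegenerate_head[OF h lie _ _] Cons.prems(1) e1 True p by blast
  next
    case False
    then have "e \<in> m" using Cons.prems(3) p by simp
    moreover have "nondegenerate (carrier_vec d) (fst (Vpi emb ps)) (\<lambda>x. snd (Vpi emb ps) e x)"
      using Cons.IH rest Cons.prems(2,3) p False by auto
    ultimately show ?thesis unfolding p using Vpi_nondegenerate_tail[OF h] Cons.prems(1) p by blast
  qed
qed

section \<open>Extensions and a splitting criterion\<close>

text \<open>Only \<open>E\<close> needs the bracket relation.\<close>

locale extension =
  fixes d :: nat and br :: "complex vec \<Rightarrow> complex vec \<Rightarrow> complex vec"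
    and nN :: nat and rN :: "'a::comm_ring_1 \<Rightarrow> complex vec \<Rightarrow> complex mat"
    and nE :: nat and rE :: "'a \<Rightarrow> complex vec \<Rightarrow> complex mat"
    and nM :: nat and rM :: "'a \<Rightarrow> complex vec \<Rightarrow> complex mat"
    and f g :: "complex mat"
  assumes br_carrier: "x \<in> carrier_vec d \<Longrightarrow> y \<in> carrier_vec d \<Longrightarrow> br x y \<in> carrier_vec d"
    and rN_carrier: "x \<in> carrier_vec d \<Longrightarrow> rN a x \<in> carrier_mat nN nN"
    and rE_carrier: "x \<in> carrier_vec d \<Longrightarrow> rE a x \<in> carrier_mat nE nE"
    and rM_carrier: "x \<in> carrier_vec d \<Longrightarrow> rM a x \<in> carrier_mat nM nM"
    and rE_bracket: "x \<in> carrier_vec d \<Longrightarrow> y \<in> carrier_vec d \<Longrightarrow>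
      rE (a * b) (br x y) = rE a x * rE b y - rE b y * rE a x"
    and f_carrier: "f \<in> carrier_mat nE nN"
    and f_hom: "x \<in> carrier_vec d \<Longrightarrow> f * rN a x = rE a x * f"
    and g_carrier: "g \<in> carrier_mat nM nE"
    and g_hom: "x \<in> carrier_vec d \<Longrightarrow> g * rE a x = rM a x * g"
    and f_inj: "v \<in> carrier_vec nN \<Longrightarrow> f *\<^sub>v v = 0\<^sub>v nE \<Longrightarrow> v = 0\<^sub>v nN"
    and g_surj: "w \<in> carrier_vec nM \<Longrightarrow> \<exists>u\<in>carrier_vec nE. g *\<^sub>v u = w"
    and exact: "u \<in> carrier_vec nE \<Longrightarrow> g *\<^sub>v u = 0\<^sub>v nM \<Longrightarrow> \<exists>v\<in>carrier_vec nN. u = f *\<^sub>v v"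
begin

lemma rE_commutator:
  "x \<in> carrier_vec d \<Longrightarrow> y \<in> carrier_vec d \<Longrightarrow> v \<in> carrier_vec nE \<Longrightarrow>
    rE a x *\<^sub>v (rE b y *\<^sub>v v) = rE (a * b) (br x y) *\<^sub>v v + rE b y *\<^sub>v (rE a x *\<^sub>v v)"
proof -
  assume x: "x \<in> carrier_vec d" and y: "y \<in> carrier_vec d" and v: "v \<in> carrier_vec nE"
  note carr = rE_carrier[OF x, of a] rE_carrier[OF y, of b] rE_carrier[OF br_carrier[OF x y], of "a * b"]
  have "rE a x * rE b y = rE (a * b) (br x y) + rE b y * rE a x"
    using rE_bracket[OF x y] carr by (intro eq_matI) auto
  moreover have "rE a x *\<^sub>v (rE b y *\<^sub>v v) = (rE a x * rE b y) *\<^sub>v v" using carr v by simp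
  ultimately show ?thesis using carr v by (simp add: add_mult_distrib_mat_vec[of _ nE nE])
qed

lemma zero_on_quotient_maps_into_sub:
  assumes x: "x \<in> carrier_vec d" and z: "rM a x = 0\<^sub>m nM nM" and v: "v \<in> carrier_vec nE"
  shows "\<exists>n\<in>carrier_vec nN. rE a x *\<^sub>v v = f *\<^sub>v n"
proof -
  have "g *\<^sub>v (rE a x *\<^sub>v v) = (g * rE a x) *\<^sub>v v" using g_carrier rE_carrier[OF x, of a] v by simp
  also have "\<dots> = 0\<^sub>v nM" using g_hom[OF x] z g_carrier v by simp
  finally show ?thesis using exact rE_carrier[OF x, of a] v by simp
qed

lemma zero_on_sub_kills_sub:
  assumes x: "x \<in> carrier_vec d" and z: "rN a x = 0\<^sub>m nN nN" and n: "n \<in> carrier_vec nN"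
  shows "rE a x *\<^sub>v (f *\<^sub>v n) = 0\<^sub>v nE"
proof -
  have "rE a x *\<^sub>v (f *\<^sub>v n) = (f * rN a x) *\<^sub>v n" using f_hom[OF x, of a] f_carrier rE_carrier[OF x, of a] n by simp
  then show ?thesis using z f_carrier n by simp
qed

lemma annihilators_compose:
  assumes "x \<in> carrier_vec d" "rM a x = 0\<^sub>m nM nM" "y \<in> carrier_vec d" "rN b y = 0\<^sub>m nN nN"
    and "v \<in> carrier_vec nE"
  shows "rE b y *\<^sub>v (rE a x *\<^sub>v v) = 0\<^sub>v nE"
  using zero_on_quotient_maps_into_sub[of x a v] zero_on_sub_kills_sub[of y b] assms by auto

lemma injective_on_complement:
  assumes W: "cvsubspace nE W"
    and W_sub: "\<And>n. n \<in> carrier_vec nN \<Longrightarrow> f *\<^sub>v n \<in> W \<Longrightarrow> n = 0\<^sub>v nN"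
    and w: "w1 \<in> W" "w2 \<in> W" and eq: "g *\<^sub>v w1 = g *\<^sub>v w2"
  shows "w1 = w2"
proof -
  have c: "w1 \<in> carrier_vec nE" "w2 \<in> carrier_vec nE" using w cvsubspace_carrier[OF W] by auto
  have "g *\<^sub>v (w1 - w2) = 0\<^sub>v nM"
    using g_carrier c eq by (simp add: mult_minus_distrib_mat_vec[of _ nM nE])
  then obtain n where n: "n \<in> carrier_vec nN" "w1 - w2 = f *\<^sub>v n" using exact[of "w1 - w2"] c by auto
  then have "n = 0\<^sub>v nN" using W_sub cvsubspace_diff[OF W w] by auto
  then have "w1 - w2 = 0\<^sub>v nE" using n f_carrier by simp
  then show ?thesis using vec_eq_if_diff_zero c by blast
qed

lemma complement_gives_section:
  assumes W: "cvsubspace nE W"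
    and W_inv: "\<And>a x w. x \<in> carrier_vec d \<Longrightarrow> w \<in> W \<Longrightarrow> rE a x *\<^sub>v w \<in> W"
    and W_sub: "\<And>n. n \<in> carrier_vec nN \<Longrightarrow> f *\<^sub>v n \<in> W \<Longrightarrow> n = 0\<^sub>v nN"
    and W_onto: "\<And>z. z \<in> carrier_vec nM \<Longrightarrow> \<exists>w\<in>W. g *\<^sub>v w = z"
  shows "\<exists>s. s \<in> carrier_mat nE nM \<and> (\<forall>a. \<forall>x\<in>carrier_vec d. s * rM a x = rE a x * s) \<and> g * s = 1\<^sub>m nM"
proof -
  obtain s where s_carr: "s \<in> carrier_mat nE nM" and gs: "g * s = 1\<^sub>m nM"
    and s_in_W: "\<And>z. z \<in> carrier_vec nM \<Longrightarrow> s *\<^sub>v z \<in> W"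
    using right_inverse_into_subspace[OF g_carrier W W_onto] by blast
  have gs_vec: "g *\<^sub>v (s *\<^sub>v z) = z" if "z \<in> carrier_vec nM" for z
    using g_carrier s_carr that gs by (simp flip: assoc_mult_mat_vec)
  text \<open>\<open>s\<close> is a module map, because both sides of the intertwining relation land in \<open>W\<close>
    and agree after applying \<open>g\<close>.\<close>
  have s_hom: "s * rM a x = rE a x * s" if x: "x \<in> carrier_vec d" for a x
  proof (rule mat_eq_by_vec[of _ nE nM])
    show "s * rM a x \<in> carrier_mat nE nM" "rE a x * s \<in> carrier_mat nE nM"
      using s_carr rM_carrier[OF x, of a] rE_carrier[OF x, of a] by auto
    fix v :: "complex vec" assume v: "v \<in> carrier_vec nM"
    have l: "(s * rM a x) *\<^sub>v v = s *\<^sub>v (rM a x *\<^sub>v v)" using s_carr rM_carrier[OF x, of a] v by simp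
    have r: "(rE a x * s) *\<^sub>v v = rE a x *\<^sub>v (s *\<^sub>v v)" using s_carr rE_carrier[OF x, of a] v by simp
    have "g *\<^sub>v (rE a x *\<^sub>v (s *\<^sub>v v)) = (g * rE a x) *\<^sub>v (s *\<^sub>v v)"
      using g_carrier rE_carrier[OF x, of a] s_carr v by simp
    also have "\<dots> = rM a x *\<^sub>v (g *\<^sub>v (s *\<^sub>v v))"
      using g_hom[OF x, of a] g_carrier rM_carrier[OF x, of a] s_carr v by simp
    also have "\<dots> = g *\<^sub>v (s *\<^sub>v (rM a x *\<^sub>v v))"
      using rM_carrier[OF x, of a] v gs_vec by simp
    finally show "(s * rM a x) *\<^sub>v v = (rE a x * s) *\<^sub>v v"
      unfolding l r using injective_on_complement[OF W W_sub] s_in_W W_inv[OF x s_in_W[OF v]]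
        rM_carrier[OF x, of a] v by simp
  qed
  show ?thesis using s_carr s_hom gs by blast
qed

end

definition separating_triple :: "nat \<Rightarrow> 'a::comm_ring_1 agmod \<Rightarrow> 'a agmod \<Rightarrow> 'a \<Rightarrow> 'a \<Rightarrow> 'a \<Rightarrow> bool" where
  "separating_triple d M N e e' u \<longleftrightarrow>
     jointly_spanning (carrier_vec d) (fst M) (\<lambda>x. snd M e x) \<and>
     jointly_injective (carrier_vec d) (fst N) (\<lambda>x. snd N e' x) \<and>
     (\<forall>x\<in>carrier_vec d. snd M e' x = 0\<^sub>m (fst M) (fst M)) \<and>
     (\<forall>b. \<forall>x\<in>carrier_vec d. snd N (e * b) x = 0\<^sub>m (fst N) (fst N)) \<and>
     (\<forall>b. \<forall>x\<in>carrier_vec d. snd M (u * b) x = 0\<^sub>m (fst M) (fst M) \<and> snd N (u * b) x = 0\<^sub>m (fst N) (fst N)) \<and>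
     e' * e = u * u"

context extension
begin

definition ideal_generators :: "'a \<Rightarrow> complex vec set" where
  "ideal_generators e = {rE (e * b) y *\<^sub>v v |b y v. y \<in> carrier_vec d \<and> v \<in> carrier_vec nE}"

definition ideal_image :: "'a \<Rightarrow> complex vec set" where
  "ideal_image e = vspan nE (ideal_generators e)"

lemma ideal_generatorsI:
  "y \<in> carrier_vec d \<Longrightarrow> v \<in> carrier_vec nE \<Longrightarrow> rE (e * b) y *\<^sub>v v \<in> ideal_generators e"
  unfolding ideal_generators_def by blast

lemma ideal_generatorsE:
  assumes "w \<in> ideal_generators e"
  obtains b y v where "w = rE (e * b) y *\<^sub>v v" "y \<in> carrier_vec d" "v \<in> carrier_vec nE"
  using assms unfolding ideal_generators_def by blast

lemma ideal_generators_carrier: "ideal_generators e \<subseteq> carrier_vec nE"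
proof
  fix w assume "w \<in> ideal_generators e"
  then obtain b y v where "w = rE (e * b) y *\<^sub>v v" "y \<in> carrier_vec d" "v \<in> carrier_vec nE"
    by (rule ideal_generatorsE)
  then show "w \<in> carrier_vec nE" using rE_carrier[of y "e * b"] by simp
qed

lemma ideal_image_subspace: "cvsubspace nE (ideal_image e)"
  unfolding ideal_image_def using ideal_generators_carrier by (rule vspan_subspace)

lemma ideal_generators_in_image: "y \<in> carrier_vec d \<Longrightarrow> v \<in> carrier_vec nE \<Longrightarrow> rE (e * b) y *\<^sub>v v \<in> ideal_image e"
  unfolding ideal_image_def by (rule subsetD[OF vspan_superset ideal_generatorsI])

text \<open>\<open>(eA \<otimes> g) E\<close> is a submodule, since \<open>eA\<close> is an ideal.\<close>

lemma ideal_image_invariant: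
  assumes x: "x \<in> carrier_vec d" and w: "w \<in> ideal_image e"
  shows "rE a x *\<^sub>v w \<in> ideal_image e"
  using w unfolding ideal_image_def
proof (rule vspan_invariant[OF rE_carrier[OF x] ideal_generators_carrier, rotated])
  fix w' assume "w' \<in> ideal_generators e"
  then obtain b y v where w': "w' = rE (e * b) y *\<^sub>v v" and y: "y \<in> carrier_vec d" and v: "v \<in> carrier_vec nE"
    by (rule ideal_generatorsE)
  have "rE (a * (e * b)) (br x y) *\<^sub>v v = rE (e * (a * b)) (br x y) *\<^sub>v v" by (simp add: ac_simps)
  then have "rE (a * (e * b)) (br x y) *\<^sub>v v \<in> ideal_image e"
    using ideal_generators_in_image[OF br_carrier[OF x y] v, of e "a * b"] by simp
  moreover have "rE (e * b) y *\<^sub>v (rE a x *\<^sub>v v) \<in> ideal_image e"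
    using ideal_generators_in_image[OF y mult_mat_vec_carrier[OF rE_carrier[OF x] v]] .
  ultimately show "rE a x *\<^sub>v w' \<in> vspan nE (ideal_generators e)"
    unfolding w' rE_commutator[OF x y v] ideal_image_def[symmetric]
    by (rule cvsubspace_add[OF ideal_image_subspace])
qed

text \<open>The key computation: under the separation hypotheses, \<open>e' \<otimes> g\<close> kills \<open>(eA \<otimes> g) E\<close>,
  since \<open>e' \<otimes> x\<close> maps \<open>E\<close> into \<open>N\<close>, which \<open>eb \<otimes> y\<close> kills, and \<open>e'eb = u \<cdot> ub\<close> with
  \<open>u\<close> acting by zero on both \<open>M\<close> and \<open>N\<close>.\<close>

lemma ideal_image_killed:
  assumes sep: "separating_triple d (nM, rM) (nN, rN) e e' u"
    and x: "x \<in> carrier_vec d" and w: "w \<in> ideal_image e"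
  shows "rE e' x *\<^sub>v w = 0\<^sub>v nE"
proof (rule vspan_kernel[OF rE_carrier[OF x] _ w[unfolded ideal_image_def]])
  fix w' assume "w' \<in> ideal_generators e"
  then obtain b y v where w': "w' = rE (e * b) y *\<^sub>v v" and y: "y \<in> carrier_vec d" and v: "v \<in> carrier_vec nE"
    by (rule ideal_generatorsE)
  have M_e': "rM e' x = 0\<^sub>m nM nM" and N_e: "rN (e * b) y = 0\<^sub>m nN nN"
    and M_u: "\<And>c z. z \<in> carrier_vec d \<Longrightarrow> rM (u * c) z = 0\<^sub>m nM nM"
    and N_u: "\<And>c z. z \<in> carrier_vec d \<Longrightarrow> rN (u * c) z = 0\<^sub>m nN nN"
    and factor: "e' * e = u * u"
    using sep x y by (simp_all add: separating_triple_def)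
  have "e' * (e * b) = u * (u * b)" by (metis factor mult.assoc)
  then have "rE (e' * (e * b)) (br x y) *\<^sub>v v = rE u x *\<^sub>v (rE (u * b) y *\<^sub>v v) - rE (u * b) y *\<^sub>v (rE u x *\<^sub>v v)"
    using rE_bracket[OF x y, of u "u * b"]
      commutator_mult_mat_vec[OF rE_carrier[OF x, of u] rE_carrier[OF y, of "u * b"] v] by simp
  also have "\<dots> = 0\<^sub>v nE"
    using annihilators_compose[OF y M_u[OF y] x N_u[OF x, of 1] v]
      annihilators_compose[OF x M_u[OF x, of 1] y N_u[OF y] v] by simp
  finally have first: "rE (e' * (e * b)) (br x y) *\<^sub>v v = 0\<^sub>v nE" .
  have second: "rE (e * b) y *\<^sub>v (rE e' x *\<^sub>v v) = 0\<^sub>v nE"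
    using annihilators_compose[OF x M_e' y N_e v] .
  have "rE e' x *\<^sub>v w' = 0\<^sub>v nE + 0\<^sub>v nE"
    unfolding w' rE_commutator[OF x y v] first second ..
  moreover have "w' \<in> carrier_vec nE" using rE_carrier[OF y, of "e * b"] v w' by simp
  ultimately show "w' \<in> carrier_vec nE \<and> rE e' x *\<^sub>v w' = 0\<^sub>v nE" by simp
qed

lemma killed_part_meets_sub_trivially:
  assumes inj: "jointly_injective (carrier_vec d) nN (\<lambda>x. rN e' x)"
    and killed: "\<And>x w. x \<in> carrier_vec d \<Longrightarrow> w \<in> W \<Longrightarrow> rE e' x *\<^sub>v w = 0\<^sub>v nE"
    and n: "n \<in> carrier_vec nN" and fn: "f *\<^sub>v n \<in> W"
  shows "n = 0\<^sub>v nN"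
proof -
  have "rN e' x *\<^sub>v n = 0\<^sub>v nN" if x: "x \<in> carrier_vec d" for x
  proof -
    have "f *\<^sub>v (rN e' x *\<^sub>v n) = (f * rN e' x) *\<^sub>v n"
      using f_carrier rN_carrier[OF x, of e'] n by simp
    also have "\<dots> = rE e' x *\<^sub>v (f *\<^sub>v n)"
      using f_hom[OF x, of e'] f_carrier rE_carrier[OF x, of e'] n by simp
    also have "\<dots> = 0\<^sub>v nE" using killed[OF x fn] .
    finally show ?thesis using f_inj rN_carrier[OF x, of e'] n by simp
  qed
  then show ?thesis using inj n unfolding jointly_injective_def by blast
qed

lemma ideal_image_onto:
  assumes span: "jointly_spanning (carrier_vec d) nM (\<lambda>x. rM e x)" and z: "z \<in> carrier_vec nM"
  shows "\<exists>w\<in>ideal_image e. g *\<^sub>v w = z"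
proof -
  let ?S = "(*\<^sub>v) g ` ideal_image e"
  have "\<forall>x\<in>carrier_vec d. \<forall>u'\<in>carrier_vec nM. rM e x *\<^sub>v u' \<in> ?S"
  proof (intro ballI)
    fix x u' :: "complex vec" assume x: "x \<in> carrier_vec d" and u': "u' \<in> carrier_vec nM"
    obtain v where v: "v \<in> carrier_vec nE" "g *\<^sub>v v = u'" using g_surj[OF u'] by blast
    have "rE (e * 1) x *\<^sub>v v \<in> ideal_image e" using ideal_generators_in_image[OF x v(1)] .
    then have mem: "rE e x *\<^sub>v v \<in> ideal_image e" by simp
    have "g *\<^sub>v (rE e x *\<^sub>v v) = (g * rE e x) *\<^sub>v v"
      using g_carrier rE_carrier[OF x, of e] v by simp
    also have "\<dots> = rM e x *\<^sub>v u'"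
      using g_hom[OF x, of e] g_carrier rM_carrier[OF x, of e] v by simp
    finally show "rM e x *\<^sub>v u' \<in> ?S" by (rule image_eqI[OF sym mem])
  qed
  moreover have "cvsubspace nM ?S" by (rule image_subspace[OF g_carrier ideal_image_subspace])
  moreover have "cvsubspace nM ?S \<and> (\<forall>x\<in>carrier_vec d. \<forall>u'\<in>carrier_vec nM. rM e x *\<^sub>v u' \<in> ?S)
      \<longrightarrow> ?S = carrier_vec nM"
    using span unfolding jointly_spanning_def by (rule spec)
  ultimately have "?S = carrier_vec nM" by blast
  then have "z \<in> ?S" using z by simp
  then show ?thesis by (elim imageE) blast
qed

theorem separated_extension_splits:
  assumes sep: "separating_triple d (nM, rM) (nN, rN) e e' u"
  shows "\<exists>s. s \<in> carrier_mat nE nM \<and> (\<forall>a. \<forall>x\<in>carrier_vec d. s * rM a x = rE a x * s) \<and> g * s = 1\<^sub>m nM"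
proof (rule complement_gives_section)
  have span: "jointly_spanning (carrier_vec d) nM (\<lambda>x. rM e x)"
    and inj: "jointly_injective (carrier_vec d) nN (\<lambda>x. rN e' x)"
    using sep unfolding separating_triple_def by simp_all
  show "cvsubspace nE (ideal_image e)" by (rule ideal_image_subspace)
  show "\<And>a x w. x \<in> carrier_vec d \<Longrightarrow> w \<in> ideal_image e \<Longrightarrow> rE a x *\<^sub>v w \<in> ideal_image e"
    by (rule ideal_image_invariant)
  show "\<And>n. n \<in> carrier_vec nN \<Longrightarrow> f *\<^sub>v n \<in> ideal_image e \<Longrightarrow> n = 0\<^sub>v nN"
    by (rule killed_part_meets_sub_trivially[OF inj ideal_image_killed[OF sep]])
  show "\<And>z. z \<in> carrier_vec nM \<Longrightarrow> \<exists>w\<in>ideal_image e. g *\<^sub>v w = z"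
    by (rule ideal_image_onto[OF span])
qed

end

lemma Ext1_nonzero_extension:
  assumes ext: "Ext1_nonzero emb d br M N" and lie: "lie_algebra d br"
    and M_carr: "\<And>a x. x \<in> carrier_vec d \<Longrightarrow> snd M a x \<in> carrier_mat (fst M) (fst M)"
    and N_carr: "\<And>a x. x \<in> carrier_vec d \<Longrightarrow> snd N a x \<in> carrier_mat (fst N) (fst N)"
  obtains nE rE f g where "extension d br (fst N) (snd N) nE rE (fst M) (snd M) f g"
    and "\<not> (\<exists>s. s \<in> carrier_mat nE (fst M) \<and> (\<forall>a. \<forall>x\<in>carrier_vec d. s * snd M a x = rE a x * s) \<and>
             g * s = 1\<^sub>m (fst M))"
proof -
  obtain E f g where E: "ag_rep emb d br E" and f: "ag_hom d N E f" and g: "ag_hom d E M g"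
    and f_inj: "\<forall>v\<in>carrier_vec (fst N). f *\<^sub>v v = 0\<^sub>v (fst E) \<longrightarrow> v = 0\<^sub>v (fst N)"
    and g_surj: "\<forall>w\<in>carrier_vec (fst M). \<exists>u\<in>carrier_vec (fst E). g *\<^sub>v u = w"
    and exact: "{f *\<^sub>v v |v. v \<in> carrier_vec (fst N)} = {u \<in> carrier_vec (fst E). g *\<^sub>v u = 0\<^sub>v (fst M)}"
    and nonsplit: "\<not> (\<exists>s. ag_hom d M E s \<and> g * s = 1\<^sub>m (fst M))"
    using ext unfolding Ext1_nonzero_def by blast
  obtain nE rE where E_def: "E = (nE, rE)" by (cases E)
  have "extension d br (fst N) (snd N) nE rE (fst M) (snd M) f g"
  proof (unfold_locales)
    show "\<And>x y. x \<in> carrier_vec d \<Longrightarrow> y \<in> carrier_vec d \<Longrightarrow> br x y \<in> carrier_vec d"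
      using lie by (simp add: lie_algebra_def)
    show "\<And>x v. v \<in> carrier_vec (fst N) \<Longrightarrow> f *\<^sub>v v = 0\<^sub>v nE \<Longrightarrow> v = 0\<^sub>v (fst N)"
      using f_inj by (simp add: E_def)
    show "\<And>u. u \<in> carrier_vec nE \<Longrightarrow> g *\<^sub>v u = 0\<^sub>v (fst M) \<Longrightarrow> \<exists>v\<in>carrier_vec (fst N). u = f *\<^sub>v v"
      using exact by (auto simp: E_def set_eq_iff)
  qed (use M_carr N_carr E f g g_surj in \<open>auto simp: E_def ag_rep_def ag_hom_def\<close>)
  moreover have "\<not> (\<exists>s. s \<in> carrier_mat nE (fst M) \<and> (\<forall>a. \<forall>x\<in>carrier_vec d. s * snd M a x = rE a x * s) \<and>
      g * s = 1\<^sub>m (fst M))"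
    using nonsplit by (simp add: ag_hom_def E_def)
  ultimately show ?thesis using that by blast
qed

text \<open>For two distinct points \<open>m1, m1'\<close> of a finite set of maximal ideals, take \<open>e0\<close> (resp. \<open>e0'\<close>)
  that is \<open>1\<close> modulo \<open>m1\<close> (resp. \<open>m1'\<close>) and lies in all other ideals of the set.  Then
  \<open>e = e0\<^sup>2\<close>, \<open>e' = e0'\<^sup>2\<close>, \<open>u = e0 e0'\<close> satisfy the ideal-theoretic part of separation.\<close>

lemma separating_elements:
  assumes fin: "finite Ms" and max: "\<And>m. m \<in> Ms \<Longrightarrow> max_ideal m"
    and m1: "m1 \<in> Ms" and m1': "m1' \<in> Ms" and ne: "m1 \<noteq> m1'"
  obtains e e' u where "e - 1 \<in> m1" and "e' - 1 \<in> m1'"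
    and "\<And>m b. m \<in> Ms \<Longrightarrow> m \<noteq> m1 \<Longrightarrow> e * b \<in> m"
    and "\<And>m b. m \<in> Ms \<Longrightarrow> m \<noteq> m1' \<Longrightarrow> e' * b \<in> m"
    and "\<And>m b. m \<in> Ms \<Longrightarrow> u * b \<in> m" and "e' * e = u * u"
proof -
  have ideal: "\<And>m. m \<in> Ms \<Longrightarrow> ring_ideal m" using max max_ideal_ring_ideal by blast
  have "\<exists>p. p - 1 \<in> n \<and> (\<forall>m\<in>Ms - {n}. p \<in> m)" if n: "n \<in> Ms" for n
    by (rule separating_element[OF max[OF n]]) (use fin max in auto)
  then obtain e0 e0' where e0: "e0 - 1 \<in> m1" "\<And>m. m \<in> Ms \<Longrightarrow> m \<noteq> m1 \<Longrightarrow> e0 \<in> m"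
    and e0': "e0' - 1 \<in> m1'" "\<And>m. m \<in> Ms \<Longrightarrow> m \<noteq> m1' \<Longrightarrow> e0' \<in> m"
    using m1 m1' by (metis Diff_iff singletonD)
  show ?thesis
  proof (rule that[of "e0 * e0" "e0' * e0'" "e0 * e0'"])
    show "e0 * e0 - 1 \<in> m1" "e0' * e0' - 1 \<in> m1'"
      using square_minus_one ideal e0(1) e0'(1) m1 m1' by blast+
    show "e0 * e0 * b \<in> m" if "m \<in> Ms" "m \<noteq> m1" for m b
      using ring_ideal_mult_right[OF ideal[OF that(1)] e0(2)[OF that], of "e0 * b"] by (simp add: mult.assoc)
    show "e0' * e0' * b \<in> m" if "m \<in> Ms" "m \<noteq> m1'" for m b
      using ring_ideal_mult_right[OF ideal[OF that(1)] e0'(2)[OF that], of "e0' * b"] by (simp add: mult.assoc)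
    show "e0 * e0' * b \<in> m" if m: "m \<in> Ms" for m b
    proof (cases "m = m1")
      case True
      then show ?thesis using ring_ideal_mult_right[OF ideal[OF m] e0'(2)[OF m], of "e0 * b"] ne
        by (simp add: ac_simps)
    next
      case False
      then show ?thesis using ring_ideal_mult_right[OF ideal[OF m] e0(2)[OF m], of "e0' * b"]
        by (simp add: mult.assoc)
    qed
    show "e0' * e0' * (e0 * e0) = e0 * e0' * (e0 * e0')" by (simp add: ac_simps)
  qed
qed

lemma separating_triple_exists:
  assumes h: "calg_hom emb" and lie: "lie_algebra d br"
    and ps: "valid_pi d br ps" and qs: "valid_pi d br qs"
    and disj: "fst ` set ps \<inter> fst ` set qs = {}" and ne: "ps \<noteq> []" "qs \<noteq> []"
  obtains e e' u where "separating_triple d (Vpi emb ps) (Vpi emb qs) e e' u"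
proof -
  define supp where "supp = fst ` set ps \<union> fst ` set qs"
  have supp_max: "\<And>m. m \<in> supp \<Longrightarrow> max_ideal m"
    using valid_pi_reps[OF ps] valid_pi_reps[OF qs] unfolding supp_def by auto
  have in_supp: "fst ` set ps \<subseteq> supp" "fst ` set qs \<subseteq> supp" by (auto simp: supp_def)
  define m1 m1' where "m1 = fst (hd ps)" and "m1' = fst (hd qs)"
  have m1: "m1 \<in> fst ` set ps" and m1': "m1' \<in> fst ` set qs" using ne by (simp_all add: m1_def m1'_def)
  then have "m1 \<noteq> m1'" using disj by blast
  then obtain e e' u where e1: "e - 1 \<in> m1" and e'1: "e' - 1 \<in> m1'"
    and e_in: "\<And>m b. m \<in> supp \<Longrightarrow> m \<noteq> m1 \<Longrightarrow> e * b \<in> m"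
    and e'_in: "\<And>m b. m \<in> supp \<Longrightarrow> m \<noteq> m1' \<Longrightarrow> e' * b \<in> m"
    and u_in: "\<And>m b. m \<in> supp \<Longrightarrow> u * b \<in> m" and factor: "e' * e = u * u"
    using separating_elements[of supp m1 m1'] supp_max m1 m1' in_supp by (auto simp: supp_def)
  have e'_ps: "e' \<in> m" if "m \<in> fst ` set ps" for m
  proof -
    have "m \<in> supp" "m \<noteq> m1'" using that in_supp m1' disj by blast+
    then show ?thesis using e'_in[of m 1] by simp
  qed
  have e_qs: "e * b \<in> m" if "m \<in> fst ` set qs" for m b
  proof -
    have "m \<in> supp" "m \<noteq> m1" using that in_supp m1 disj by blast+
    then show ?thesis using e_in by blast
  qed
  have "\<forall>m\<in>fst ` set ps. m \<noteq> m1 \<longrightarrow> e \<in> m" using e_in[of _ 1] in_supp(1) by auto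
  then have M_e: "nondegenerate (carrier_vec d) (fst (Vpi emb ps)) (\<lambda>x. snd (Vpi emb ps) e x)"
    by (rule Vpi_nondegenerate_at[OF h lie ps m1 e1])
  have "\<forall>m\<in>fst ` set qs. m \<noteq> m1' \<longrightarrow> e' \<in> m" using e'_in[of _ 1] in_supp(2) by auto
  then have N_e': "nondegenerate (carrier_vec d) (fst (Vpi emb qs)) (\<lambda>x. snd (Vpi emb qs) e' x)"
    by (rule Vpi_nondegenerate_at[OF h lie qs m1' e'1])
  have kill_u: "snd (Vpi emb ps) (u * b) x = 0\<^sub>m (fst (Vpi emb ps)) (fst (Vpi emb ps)) \<and>
      snd (Vpi emb qs) (u * b) x = 0\<^sub>m (fst (Vpi emb qs)) (fst (Vpi emb qs))" if "x \<in> carrier_vec d" for b x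
    using Vpi_vanishes[OF h valid_pi_reps[OF ps] _ that] Vpi_vanishes[OF h valid_pi_reps[OF qs] _ that]
      u_in in_supp by blast
  have "separating_triple d (Vpi emb ps) (Vpi emb qs) e e' u"
    unfolding separating_triple_def
    using M_e N_e' factor kill_u Vpi_vanishes[OF h valid_pi_reps[OF ps] ballI[OF e'_ps]]
      Vpi_vanishes[OF h valid_pi_reps[OF qs] ballI[OF e_qs]]
    by (simp add: nondegenerate_def)
  then show ?thesis by (rule that)
qed

theorem lemma3p3:
  fixes emb :: "complex \<Rightarrow> 'a::comm_ring_1"
    and d :: nat and br :: "complex vec \<Rightarrow> complex vec \<Rightarrow> complex vec"
    and ps qs :: "'a pidata"
  assumes "(1::'a) \<noteq> 0" and "calg_hom emb" and "fin_gen emb"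
    and "semisimple d br"
    and "valid_pi d br ps" and "valid_pi d br qs"
    and "fst ` set ps \<inter> fst ` set qs = {}"
    and "Ext1_nonzero emb d br (Vpi emb ps) (Vpi emb qs)"
  shows "ps = [] \<or> qs = []"
proof (rule ccontr)
  assume "\<not> (ps = [] \<or> qs = [])"
  have lie: "lie_algebra d br" using assms(4) by (simp add: semisimple_def)
  obtain e e' u where sep: "separating_triple d (Vpi emb ps) (Vpi emb qs) e e' u"
    using separating_triple_exists[OF assms(2) lie assms(5-7)] \<open>\<not> (ps = [] \<or> qs = [])\<close> by blast
  obtain nE rE f g
    where ext: "extension d br (fst (Vpi emb qs)) (snd (Vpi emb qs)) nE rE (fst (Vpi emb ps)) (snd (Vpi emb ps)) f g"
      and nonsplit: "\<not> (\<exists>s. s \<in> carrier_mat nE (fst (Vpi emb ps)) \<and>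
          (\<forall>a. \<forall>x\<in>carrier_vec d. s * snd (Vpi emb ps) a x = rE a x * s) \<and> g * s = 1\<^sub>m (fst (Vpi emb ps)))"
    by (rule Ext1_nonzero_extension[OF assms(8) lie Vpi_carrier[OF valid_pi_g_rep[OF assms(5)]]
          Vpi_carrier[OF valid_pi_g_rep[OF assms(6)]]])
  have "separating_triple d (fst (Vpi emb ps), snd (Vpi emb ps)) (fst (Vpi emb qs), snd (Vpi emb qs)) e e' u"
    using sep by simp
  then show False using extension.separated_extension_splits[OF ext] nonsplit by blast
qed

end
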